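(* Let $n\in\mathbb N$, let $A$ be a Young function satisfying (C1), (C2), (C3), and let $\varphi$ be a gauge function. Then the function $J$ is increasing on $(0,\infty)$, $\lim_{t\to0^+}J(t)=0$ and $\lim_{t\to\infty}J(t)=\infty$; in particular $J$ is a bijection of $[0,\infty)$ onto itself.
   Context: A gauge function is a function $\varphi\colon[0,\infty)\to[0,\infty)$ that is increasing, continuous and vanishes only at $0$, and (standing assumption) such that $r\mapsto\varphi(r)/r^n$ is non-increasing on $(0,\infty)$. A Young function is a non-trivial convex $A\colon[0,\infty)\to[0,\infty]$ with $A(0)=0$; $\widetilde A(t)=\sup_{\tau\ge0}(\tau t-A(\tau))$. Conditions: (C1) if $n=1$, $\lim_{t\to\infty}t/A(t)=0$; if $n\ge2$, $\int^\infty (t/A(t))^{1/(n-1)}dt<\infty$. (C2) $0<A(t)<\infty$ for $t>0$. (C3) if $n=1$, $\lim_{t\to0^+}t/A(t)=\infty$; if $n\ge2$, $\int_0(t/A(t))^{1/(n-1)}dt=\infty$. $B=A$ if $n=1$; for $n\ge2$, $B$ is the Young conjugate of $t\mapsto t^{n'}\int_t^\infty\widetilde A(s)s^{-1-n'}ds$, $n'=n/(n-1)$. $J(0)=0$ and $J(s)=s\,B^{-1}(\varphi(s)/s^n)$ for $s>0$. *)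

theory Defs
  imports "HOL-Analysis.Analysis"
begin

text \<open>Young functions take values in [0,\<infinity>]; we use extended reals.
  Only the values on [0,\<infinity>) are relevant.\<close>

definition young_function :: "(real \<Rightarrow> ereal) \<Rightarrow> bool" where
  "young_function A \<longleftrightarrow>
     A 0 = 0 \<and>
     (\<forall>t\<ge>0. 0 \<le> A t) \<and>
     (\<forall>x\<ge>0. \<forall>y\<ge>0. \<forall>u. 0 \<le> u \<and> u \<le> 1 \<longrightarrow>
        A ((1 - u) * x + u * y) \<le> ereal (1 - u) * A x + ereal u * A y) \<and>
     (\<exists>t>0. A t \<noteq> 0) \<and> (\<exists>t>0. A t \<noteq> \<infinity>)"

definition young_conj :: "(real \<Rightarrow> ereal) \<Rightarrow> real \<Rightarrow> ereal" where
  "young_conj A t = (SUP \<tau>\<in>{0..}. ereal (\<tau> * t) - A \<tau>)"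

definition gauge_function :: "nat \<Rightarrow> (real \<Rightarrow> real) \<Rightarrow> bool" where
  "gauge_function n \<phi> \<longleftrightarrow>
     mono_on {0..} \<phi> \<and> continuous_on {0..} \<phi> \<and>
     (\<forall>t\<ge>0. 0 \<le> \<phi> t) \<and> (\<forall>t\<ge>0. \<phi> t = 0 \<longleftrightarrow> t = 0) \<and>
     (\<forall>r s. 0 < r \<and> r \<le> s \<longrightarrow> \<phi> s / s ^ n \<le> \<phi> r / r ^ n)"

definition cond_C1 :: "nat \<Rightarrow> (real \<Rightarrow> ereal) \<Rightarrow> bool" where
  "cond_C1 n A \<longleftrightarrow>
     (if n = 1 then ((\<lambda>t. t / real_of_ereal (A t)) \<longlongrightarrow> 0) at_top
      else (\<exists>t0>0. (\<integral>\<^sup>+ t\<in>{t0..}. ennreal ((t / real_of_ereal (A t)) powr (1 / (real n - 1))) \<partial>lborel) < \<infinity>))"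

definition cond_C2 :: "(real \<Rightarrow> ereal) \<Rightarrow> bool" where
  "cond_C2 A \<longleftrightarrow> (\<forall>t>0. 0 < A t \<and> A t < \<infinity>)"

definition cond_C3 :: "nat \<Rightarrow> (real \<Rightarrow> ereal) \<Rightarrow> bool" where
  "cond_C3 n A \<longleftrightarrow>
     (if n = 1 then filterlim (\<lambda>t. t / real_of_ereal (A t)) at_top (at_right 0)
      else (\<forall>t0>0. (\<integral>\<^sup>+ t\<in>{0<..t0}. ennreal ((t / real_of_ereal (A t)) powr (1 / (real n - 1))) \<partial>lborel) = \<infinity>))"

definition holder_conj :: "nat \<Rightarrow> real" where
  "holder_conj n = real n / (real n - 1)"

definition E_fun :: "nat \<Rightarrow> (real \<Rightarrow> ereal) \<Rightarrow> real \<Rightarrow> ereal" where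
  "E_fun n A t = enn2ereal (ennreal (t powr holder_conj n) *
      (\<integral>\<^sup>+ s\<in>{t..}. e2ennreal (young_conj A s) * ennreal (s powr (- 1 - holder_conj n)) \<partial>lborel))"

definition B_fun :: "nat \<Rightarrow> (real \<Rightarrow> ereal) \<Rightarrow> real \<Rightarrow> ereal" where
  "B_fun n A = (if n = 1 then A else young_conj (E_fun n A))"

definition gen_inv :: "(real \<Rightarrow> ereal) \<Rightarrow> real \<Rightarrow> real" where
  "gen_inv B s = Sup {t. 0 \<le> t \<and> B t \<le> ereal s}"

definition J_fun :: "nat \<Rightarrow> (real \<Rightarrow> ereal) \<Rightarrow> (real \<Rightarrow> real) \<Rightarrow> real \<Rightarrow> real" where
  "J_fun n A \<phi> s = (if s = 0 then 0 else s * gen_inv (B_fun n A) (\<phi> s / s ^ n))"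

end

theory Submission
  imports Defs
begin

text \<open>Write \<open>b\<close> for the real-valued \<open>B\<close> and \<open>v = B\<^sup>-\<^sup>1(\<phi>(s)/s\<^sup>n)\<close>, so that \<open>J(s) = s v\<close> and
  \<open>J(s)\<^sup>n \<cdot> b(v)/v\<^sup>n = \<phi>(s)\<close>. Everything follows once \<open>b\<close> is continuous, positive, with \<open>b(t)/t\<^sup>n\<close>
  strictly increasing and tending to 0 at \<open>0\<^sup>+\<close>: strict monotonicity of \<open>J\<close> then comes from that of
  \<open>b(t)/t\<^sup>n\<close> together with \<open>\<phi>\<close> nondecreasing and \<open>\<phi>(s)/s\<^sup>n\<close> nonincreasing; \<open>\<phi>(s) \<rightarrow> 0\<close> forces
  \<open>J(s) \<rightarrow> 0\<close>, and \<open>\<phi>(s) \<ge> \<phi>(1)\<close> for \<open>s \<ge> 1\<close> forces \<open>J(s) \<rightarrow> \<infinity>\<close>.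

  For \<open>n = 1\<close>, \<open>b = A\<close> and (C3) says \<open>A(t)/t \<rightarrow> 0\<close>; strictness comes from convexity. For
  \<open>n \<ge> 2\<close>, (C1) makes \<open>\<tilde>A\<close> finite and \<open>E\<close> finite on \<open>(0,\<infinity>)\<close>, while (C3) makes
  \<open>\<integral>\<^sub>0\<^sup>1 \<tilde>A(s) s\<^sup>-\<^sup>1\<^sup>-\<^sup>n\<^sup>' ds\<close> diverge, so that \<open>E(t)/t\<^sup>n\<^sup>' \<rightarrow> \<infinity>\<close> at \<open>0\<^sup>+\<close>, which
  dualises to \<open>B(t)/t\<^sup>n \<rightarrow> 0\<close>. Comparing \<open>E\<close> at \<open>\<sigma>\<close> and at \<open>l\<^sup>n\<^sup>-\<^sup>1 \<sigma>\<close> gives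
  \<open>E(l\<^sup>n\<^sup>-\<^sup>1 \<sigma>) \<ge> l\<^sup>n E(\<sigma>)\<close> with a strict margin, hence \<open>B(l t) < l\<^sup>n B(t)\<close>.\<close>

lemma young_conj_ge: "\<tau> \<ge> 0 \<Longrightarrow> ereal (\<tau> * t) - H \<tau> \<le> young_conj H t"
  unfolding young_conj_def by (intro SUP_upper) auto

lemma young_conj_least:
  "(\<And>\<tau>. \<tau> \<ge> 0 \<Longrightarrow> ereal (\<tau> * t) - H \<tau> \<le> y) \<Longrightarrow> young_conj H t \<le> y"
  unfolding young_conj_def by (intro SUP_least) auto

lemma young_conj_real:
  assumes H: "\<And>\<tau>. \<tau> \<ge> 0 \<Longrightarrow> H \<tau> = ereal (h \<tau>)"
    and bounded: "\<And>\<tau>. \<tau> \<ge> 0 \<Longrightarrow> \<tau> * t - h \<tau> \<le> K"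
  shows "young_conj H t = ereal (real_of_ereal (young_conj H t))"
    and "\<And>\<tau>. \<tau> \<ge> 0 \<Longrightarrow> \<tau> * t - h \<tau> \<le> real_of_ereal (young_conj H t)"
    and "\<And>y. (\<And>\<tau>. \<tau> \<ge> 0 \<Longrightarrow> \<tau> * t - h \<tau> \<le> y) \<Longrightarrow> real_of_ereal (young_conj H t) \<le> y"
proof -
  have lower: "ereal (\<tau> * t - h \<tau>) \<le> young_conj H t" if "\<tau> \<ge> 0" for \<tau>
    using young_conj_ge[OF that, of t H] H[OF that] by simp
  have upper: "young_conj H t \<le> ereal y" if "\<And>\<tau>. \<tau> \<ge> 0 \<Longrightarrow> \<tau> * t - h \<tau> \<le> y" for y
    by (rule young_conj_least) (use that H in auto)
  have "\<bar>young_conj H t\<bar> \<noteq> \<infinity>"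
    using lower[of 0] upper[of K] bounded by auto
  then show real: "young_conj H t = ereal (real_of_ereal (young_conj H t))"
    by (simp add: ereal_real')
  show "\<tau> * t - h \<tau> \<le> real_of_ereal (young_conj H t)" if "\<tau> \<ge> 0" for \<tau>
    using lower[OF that] real by (metis ereal_less_eq(3))
  show "real_of_ereal (young_conj H t) \<le> y" if "\<And>\<tau>. \<tau> \<ge> 0 \<Longrightarrow> \<tau> * t - h \<tau> \<le> y" for y
    using upper[OF that] real by (metis ereal_less_eq(3))
qed

lemma emeasure_lborel_Ici: "emeasure lborel {t::real..} = \<infinity>"
proof (rule ccontr)
  assume "emeasure lborel {t..} \<noteq> \<infinity>"
  then obtain r where r: "emeasure lborel {t..} = ennreal r" "r \<ge> 0"
    by (cases "emeasure lborel {t..}") auto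
  have "emeasure lborel {t..t+r+1} \<le> emeasure lborel {t..}"
    by (rule emeasure_mono) auto
  with r show False by simp
qed

lemma nn_integral_powr_Ici:
  assumes "m > 0" and "r > 1"
  shows "(\<integral>\<^sup>+ s. ennreal (s powr (-r)) * indicator {m..} s \<partial>lborel) = ennreal (m powr (1-r) / (r-1))"
proof -
  have "((\<lambda>x. x powr (-r)) has_integral -(m powr (-r+1)) / (-r+1)) {m..}"
    using assms by (intro has_integral_powr_to_inf) auto
  then have "(\<integral>\<^sup>+ s. ennreal (s powr (-r)) * indicator {m..} s \<partial>lborel) = ennreal (-(m powr (-r+1)) / (-r+1))"
    by (intro nn_integral_has_integral_lebesgue') auto
  also have "-(m powr (-r+1)) / (-r+1) = m powr (1-r) / (r-1)"
    using assms by (simp add: field_simps)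
  finally show ?thesis .
qed

lemma gauge_function_pos: "gauge_function n \<phi> \<Longrightarrow> t > 0 \<Longrightarrow> \<phi> t > 0"
  unfolding gauge_function_def by (metis less_eq_real_def less_irrefl)

lemma gauge_function_mono: "gauge_function n \<phi> \<Longrightarrow> 0 \<le> s \<Longrightarrow> s \<le> t \<Longrightarrow> \<phi> s \<le> \<phi> t"
  unfolding gauge_function_def by (auto simp: mono_on_def)

lemma gauge_function_tendsto_0: "gauge_function n \<phi> \<Longrightarrow> (\<phi> \<longlongrightarrow> 0) (at_right 0)"
proof -
  assume gauge: "gauge_function n \<phi>"
  then have "continuous_on {0..1} \<phi>"
    unfolding gauge_function_def by (auto elim: continuous_on_subset)
  then have "(\<phi> \<longlongrightarrow> \<phi> 0) (at_right 0)"
    by (rule continuous_on_Icc_at_rightD) simp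
  moreover have "\<phi> 0 = 0" using gauge unfolding gauge_function_def by simp
  ultimately show ?thesis by simp
qed

lemma strict_mono_on_bij_betw_nonneg:
  fixes f :: "real \<Rightarrow> real"
  assumes mono: "strict_mono_on {0..} f" and zero: "f 0 = 0"
    and cont: "continuous_on {0<..} f"
    and at_0: "(f \<longlongrightarrow> 0) (at_right 0)" and at_infinity: "filterlim f at_top at_top"
  shows "bij_betw f {0..} {0..}"
proof -
  have nonneg: "f s \<ge> 0" if "s \<ge> 0" for s
    using that zero strict_mono_onD[OF mono, of 0 s] by (cases "s = 0") auto
  have "y \<in> f ` {0<..}" if "y > 0" for y
  proof -
    have "\<forall>\<^sub>F s in at_right 0. f s < y \<and> s > 0"
      using order_tendstoD(2)[OF at_0 that] by (auto simp: eventually_at_right_field elim: eventually_mono)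
    then obtain s1 where s1: "s1 > 0" "f s1 < y"
      by (metis (mono_tags, lifting) eventually_happens' trivial_limit_at_right_real)
    have "\<forall>\<^sub>F s in at_top. y \<le> f s \<and> s \<ge> s1"
      using filterlim_at_top[THEN iffD1, OF at_infinity] eventually_ge_at_top[of s1]
      by (auto intro: eventually_conj)
    then obtain s2 where s2: "y \<le> f s2" "s2 \<ge> s1"
      using eventually_happens' trivial_limit_at_top_linorder by blast
    have "continuous_on {s1..s2} f" by (rule continuous_on_subset[OF cont]) (use s1 in auto)
    then obtain x where "s1 \<le> x" "x \<le> s2" "f x = y"
      using IVT'[of f s1 y s2] s1 s2 by auto
    with s1 show ?thesis by force
  qed
  then have "{0..} \<subseteq> f ` {0..}"
    using zero by (force simp: le_less)
  then show ?thesis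
    unfolding bij_betw_def using strict_mono_on_imp_inj_on[OF mono] nonneg by auto
qed

section \<open>Superhomogeneous functions and the map \<open>J\<close>\<close>

locale superhomogeneous =
  fixes n :: nat and b :: "real \<Rightarrow> real"
  assumes n_ge_1: "n \<ge> 1"
    and zero: "b 0 = 0" and pos: "\<And>t. t > 0 \<Longrightarrow> 0 < b t"
    and continuous: "continuous_on {0<..} b"
    and scale_less: "\<And>l t. 0 < l \<Longrightarrow> l < 1 \<Longrightarrow> 0 < t \<Longrightarrow> b (l * t) < l ^ n * b t"
begin

lemma scale_le: assumes "0 < l" "l \<le> 1" "0 \<le> t" shows "b (l * t) \<le> l ^ n * b t"
proof (cases "t = 0")
  case True then show ?thesis using zero by simp
next
  case False
  then show ?thesis using scale_less[of l t] assms by (cases "l = 1") force+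
qed

lemma nonneg: "t \<ge> 0 \<Longrightarrow> b t \<ge> 0"
  using zero pos by (cases "t = 0") (auto intro: less_imp_le)

lemma strict_mono_less: assumes "0 \<le> s" "s < t" shows "b s < b t"
proof (cases "s = 0")
  case True then show ?thesis using zero pos assms by simp
next
  case False
  then have "b ((s/t) * t) < (s/t) ^ n * b t" using assms by (intro scale_less) auto
  also have "\<dots> \<le> 1 * b t" using assms nonneg[of t]
    by (intro mult_right_mono power_le_one) auto
  finally show ?thesis using assms by simp
qed

lemma mono_le: "0 \<le> s \<Longrightarrow> s \<le> t \<Longrightarrow> b s \<le> b t"
  using strict_mono_less by (cases "s = t") (auto intro: less_imp_le)

lemma power_mult_le: assumes "t \<ge> 1" shows "t ^ n * b 1 \<le> b t"
proof -
  have "b ((1/t) * t) \<le> (1/t) ^ n * b t" using assms by (intro scale_le) auto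
  then have "b 1 \<le> b t / t ^ n" using assms by (simp add: power_divide)
  then show ?thesis using assms by (simp add: field_simps)
qed

lemma le_linear: assumes "0 \<le> t" "t \<le> 1" shows "b t \<le> t * b 1"
proof -
  have "b (t * 1) \<le> t ^ n * b 1"
    using assms zero nonneg[of 1] scale_le[of t 1] by (cases "t = 0") auto
  also have "\<dots> \<le> t * b 1" using assms n_ge_1 nonneg[of 1]
    by (intro mult_right_mono) (auto intro: power_decreasing[of 1 n t, simplified])
  finally show ?thesis by simp
qed

lemma surj_nonneg: assumes "u \<ge> 0" shows "\<exists>t\<ge>0. b t = u"
proof (cases "u = 0")
  case True then show ?thesis using zero by auto
next
  case False
  with assms have u: "u > 0" by simp
  have b1: "b 1 > 0" using pos by simp
  define r where "r = min 1 (u / (2 * b 1))"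
  have r: "0 < r" "r \<le> 1" using u b1 by (auto simp: r_def)
  have "b r \<le> r * b 1" using r by (intro le_linear) auto
  also have "\<dots> \<le> u/2" using b1 by (simp add: r_def min_def field_simps)
  finally have br: "b r \<le> u" using u by simp
  define R where "R = max 1 (u / b 1)"
  have R: "R \<ge> 1" by (simp add: R_def)
  have "u \<le> R * b 1" using b1 by (simp add: R_def max_def field_simps)
  also have "\<dots> \<le> R ^ n * b 1" using R n_ge_1 b1
    by (intro mult_right_mono) (auto intro: power_increasing[of 1 n R, simplified])
  also have "\<dots> \<le> b R" using R by (rule power_mult_le)
  finally have bR: "u \<le> b R" .
  have "continuous_on {r..R} b" by (rule continuous_on_subset[OF continuous]) (use r in auto)
  then obtain x where "r \<le> x" "x \<le> R" "b x = u" using IVT'[of b r u R] br bR r R by auto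
  then show ?thesis using r by (intro exI[of _ x]) auto
qed

definition ginv :: "real \<Rightarrow> real" where "ginv u = Sup {t. 0 \<le> t \<and> b t \<le> u}"

lemma ginv_b: assumes "0 \<le> t" shows "ginv (b t) = t"
proof -
  have "{x. 0 \<le> x \<and> b x \<le> b t} = {0..t}"
    using strict_mono_less mono_le assms by (auto simp: not_le[symmetric]) (meson not_le)
  then show ?thesis using assms by (simp add: ginv_def)
qed

lemma ginv_nonneg: "u \<ge> 0 \<Longrightarrow> ginv u \<ge> 0"
  and b_ginv: "u \<ge> 0 \<Longrightarrow> b (ginv u) = u"
  using surj_nonneg[of u] ginv_b by auto

lemma ginv_pos: "u > 0 \<Longrightarrow> ginv u > 0"
  using ginv_nonneg[of u] b_ginv[of u] zero by (cases "ginv u = 0") auto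

lemma ginv_less: assumes "0 \<le> u" "u < u'" shows "ginv u < ginv u'"
proof (rule ccontr)
  assume "\<not> ?thesis"
  then have "b (ginv u') \<le> b (ginv u)" using ginv_nonneg assms by (intro mono_le) auto
  then show False using b_ginv[of u] b_ginv[of u'] assms by auto
qed

lemma isCont_ginv: assumes "u > 0" shows "isCont ginv u"
proof -
  define t where "t = ginv u"
  have t: "t > 0" "b t = u" using ginv_pos b_ginv assms by (auto simp: t_def)
  let ?S = "{t/2..2*t}"
  have cont: "continuous_on ?S b" by (rule continuous_on_subset[OF continuous]) (use t in auto)
  have image: "b ` ?S = {b (t/2)..b (2*t)}"
  proof
    show "b ` ?S \<subseteq> {b (t/2)..b (2*t)}" using mono_le t by auto
    show "{b (t/2)..b (2*t)} \<subseteq> b ` ?S"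
    proof
      fix y assume "y \<in> {b (t/2)..b (2*t)}"
      then obtain x where "t/2 \<le> x" "x \<le> 2*t" "b x = y"
        using IVT'[of b "t/2" y "2*t"] cont t by auto
      then show "y \<in> b ` ?S" by auto
    qed
  qed
  have "continuous_on (b ` ?S) ginv"
    by (rule continuous_on_inv[OF cont]) (use ginv_b t in auto)
  moreover have "u \<in> interior {b (t/2)..b (2*t)}"
    using strict_mono_less[of "t/2" t] strict_mono_less[of t "2*t"] t by auto
  ultimately show ?thesis using continuous_on_interior image by metis
qed

lemma gen_inv_eq_ginv: "(\<And>t. t \<ge> 0 \<Longrightarrow> B t = ereal (b t)) \<Longrightarrow> gen_inv B = ginv"
  by (intro ext) (auto simp: gen_inv_def ginv_def intro!: arg_cong[where f=Sup])

definition J :: "(real \<Rightarrow> real) \<Rightarrow> real \<Rightarrow> real" where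
  "J \<phi> s = (if s = 0 then 0 else s * ginv (\<phi> s / s ^ n))"

lemma J_fun_eq_J:
  assumes "\<And>t. t \<ge> 0 \<Longrightarrow> B_fun n A t = ereal (b t)"
  shows "J_fun n A \<phi> = J \<phi>"
  using gen_inv_eq_ginv[OF assms] by (intro ext) (simp add: J_fun_def J_def)

context
  fixes \<phi> :: "real \<Rightarrow> real"
  assumes gauge: "gauge_function n \<phi>"
begin

lemma ratio_pos: "s > 0 \<Longrightarrow> \<phi> s / s ^ n > 0"
  using gauge_function_pos[OF gauge] by simp

lemma J_pos: assumes "s > 0" shows "J \<phi> s > 0"
proof -
  have "ginv (\<phi> s / s ^ n) > 0" by (rule ginv_pos[OF ratio_pos[OF assms]])
  with assms show ?thesis by (simp add: J_def)
qed

lemma gauge_eq_J_power: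
  assumes "s > 0"
  shows "\<phi> s = J \<phi> s ^ n * (b (ginv (\<phi> s / s ^ n)) / ginv (\<phi> s / s ^ n) ^ n)"
proof -
  have "b (ginv (\<phi> s / s ^ n)) = \<phi> s / s ^ n" using ratio_pos[OF assms] by (intro b_ginv) simp
  then show ?thesis using assms ginv_pos[OF ratio_pos[OF assms]] by (simp add: J_def power_mult_distrib)
qed

lemma J_less: assumes "0 < s1" "s1 < s2" shows "J \<phi> s1 < J \<phi> s2"
proof -
  define l where "l = s1 / s2"
  have l: "0 < l" "l < 1" using assms by (auto simp: l_def)
  define v1 where "v1 = ginv (\<phi> s1 / s1 ^ n)"
  have v1: "v1 > 0" "b v1 = \<phi> s1 / s1 ^ n"
    using ginv_pos b_ginv ratio_pos assms by (auto simp: v1_def less_imp_le)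
  have "\<phi> s1 \<le> \<phi> s2" using gauge_function_mono[OF gauge] assms by simp
  then have "l ^ n * (\<phi> s1 / s1 ^ n) \<le> \<phi> s2 / s2 ^ n"
    using assms by (simp add: l_def power_divide divide_right_mono)
  moreover have "b (l * v1) < l ^ n * b v1" using l v1 by (intro scale_less) auto
  ultimately have "b (l * v1) < \<phi> s2 / s2 ^ n" using v1 by simp
  then have "ginv (b (l * v1)) < ginv (\<phi> s2 / s2 ^ n)" using l v1 by (intro ginv_less) (auto intro: nonneg)
  then have "s2 * (l * v1) < s2 * ginv (\<phi> s2 / s2 ^ n)" using ginv_b[of "l * v1"] l v1 assms by simp
  then show ?thesis using assms by (simp add: J_def l_def v1_def)
qed

lemma strict_mono_on_J: "strict_mono_on {0..} (J \<phi>)"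
proof (rule strict_mono_onI)
  fix r s :: real assume "r \<in> {0..}" "s \<in> {0..}" "r < s"
  then show "J \<phi> r < J \<phi> s" using J_less[of r s] J_pos[of s] by (cases "r = 0") (auto simp: J_def)
qed

lemma continuous_on_J: "continuous_on {0<..} (J \<phi>)"
proof -
  have "continuous_on {0<..} \<phi>"
    using gauge unfolding gauge_function_def by (auto elim: continuous_on_subset)
  then have ratio: "continuous_on {0<..} (\<lambda>s. \<phi> s / s ^ n)"
    by (intro continuous_on_divide continuous_on_power continuous_on_id) auto
  have "continuous_on {0<..} ginv"
    by (intro continuous_at_imp_continuous_on ballI isCont_ginv) auto
  then have "continuous_on {0<..} (\<lambda>s. ginv (\<phi> s / s ^ n))"
    by (rule continuous_on_compose2[OF _ ratio]) (auto intro: ratio_pos)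
  then have "continuous_on {0<..} (\<lambda>s. s * ginv (\<phi> s / s ^ n))"
    by (intro continuous_on_mult continuous_on_id)
  then show ?thesis by (rule continuous_on_cong[THEN iffD1, rotated -1]) (auto simp: J_def)
qed

text \<open>By \<open>gauge_eq_J_power\<close>, \<open>J \<phi> s ^ n * b 1 \<le> \<phi> s\<close> where \<open>ginv (\<phi> s / s ^ n) \<ge> 1\<close>, and \<open>J \<phi> s < s\<close>
  elsewhere.\<close>
lemma J_tendsto_0: "(J \<phi> \<longlongrightarrow> 0) (at_right 0)"
proof (rule tendstoI)
  fix e :: real assume e: "e > 0"
  have b1: "b 1 > 0" using pos by simp
  have small: "\<forall>\<^sub>F s in at_right 0. \<phi> s < e ^ n * b 1"
    by (rule order_tendstoD(2)[OF gauge_function_tendsto_0[OF gauge]]) (use e b1 in simp)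
  have "\<forall>\<^sub>F s in at_right 0. s < e \<and> s > 0"
    using e by (auto simp: eventually_at_right_field intro!: exI[of _ e])
  with small show "\<forall>\<^sub>F s in at_right 0. dist (J \<phi> s) 0 < e"
  proof eventually_elim
    case (elim s)
    define v where "v = ginv (\<phi> s / s ^ n)"
    have "J \<phi> s < e"
    proof (cases "v < 1")
      case True
      then have "s * v < s" using elim by simp
      moreover have "J \<phi> s = s * v" using elim by (simp add: J_def v_def)
      ultimately show ?thesis using elim by linarith
    next
      case False
      then have "b 1 \<le> b v / v ^ n" using power_mult_le[of v] by (simp add: field_simps)
      then have "J \<phi> s ^ n * b 1 \<le> J \<phi> s ^ n * (b v / v ^ n)"
        using J_pos[of s] elim by (intro mult_left_mono) auto
      also have "\<dots> = \<phi> s" unfolding v_def by (rule gauge_eq_J_power[symmetric]) (use elim in simp)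
      finally have "J \<phi> s ^ n * b 1 \<le> \<phi> s" .
      then have "J \<phi> s ^ n * b 1 < e ^ n * b 1" using elim by linarith
      then have "J \<phi> s ^ n < e ^ n" using b1 by simp
      then show ?thesis by (rule power_less_imp_less_base) (use e in simp)
    qed
    then show ?case using J_pos[of s] elim by (simp add: dist_real_def)
  qed
qed

text \<open>Dually, \<open>\<phi> 1 \<le> \<phi> s\<close> for \<open>s \<ge> 1\<close> keeps \<open>J \<phi> s ^ n * (b v / v ^ n)\<close> away from 0, while
  \<open>b v / v ^ n\<close> is small for small \<open>v\<close>.\<close>
lemma J_at_top:
  assumes flat: "\<And>e. e > 0 \<Longrightarrow> \<forall>\<^sub>F t in at_right 0. b t \<le> e * t ^ n"
  shows "filterlim (J \<phi>) at_top at_top"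
proof (rule filterlim_at_top_gt[where c=0, THEN iffD2], intro allI impI)
  fix Z :: real assume Z: "Z > 0"
  have \<phi>1: "\<phi> 1 > 0" using gauge_function_pos[OF gauge] by simp
  obtain d where d: "d > 0" "\<And>t. 0 < t \<Longrightarrow> t < d \<Longrightarrow> b t \<le> (\<phi> 1 / Z ^ n) * t ^ n"
    using flat[of "\<phi> 1 / Z ^ n"] \<phi>1 Z by (auto simp: eventually_at_right_field)
  show "\<forall>\<^sub>F s in at_top. Z \<le> J \<phi> s"
  proof (rule eventually_at_top_linorderI[of "max 1 (Z/d)"])
    fix s assume "s \<ge> max 1 (Z/d)"
    then have s: "s \<ge> 1" "s \<ge> Z/d" by auto
    define v where "v = ginv (\<phi> s / s ^ n)"
    have v: "v > 0" using ginv_pos ratio_pos s by (simp add: v_def)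
    show "Z \<le> J \<phi> s"
    proof (cases "v < d")
      case True
      then have "b v / v ^ n \<le> \<phi> 1 / Z ^ n" using d(2)[OF v] v by (simp add: field_simps)
      have "\<phi> s = J \<phi> s ^ n * (b v / v ^ n)" unfolding v_def by (rule gauge_eq_J_power) (use s in simp)
      also have "\<dots> \<le> J \<phi> s ^ n * (\<phi> 1 / Z ^ n)"
        using \<open>b v / v ^ n \<le> \<phi> 1 / Z ^ n\<close> J_pos[of s] s by (intro mult_left_mono) auto
      finally have "\<phi> s \<le> J \<phi> s ^ n * (\<phi> 1 / Z ^ n)" .
      moreover have "\<phi> 1 \<le> \<phi> s" using gauge_function_mono[OF gauge] s by simp
      ultimately have "\<phi> 1 \<le> J \<phi> s ^ n * (\<phi> 1 / Z ^ n)" by linarith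
      then have "Z ^ n * \<phi> 1 \<le> J \<phi> s ^ n * \<phi> 1" using Z by (simp add: field_simps)
      then have "Z ^ n \<le> J \<phi> s ^ n" using \<phi>1 by simp
      then show ?thesis using power_mono_iff[of Z "J \<phi> s" n] J_pos[of s] s Z n_ge_1 by simp
    next
      case False
      have "Z = (Z/d) * d" using d by simp
      also have "\<dots> \<le> s * v" by (rule mult_mono) (use False s d Z in auto)
      finally show ?thesis using s by (simp add: J_def v_def)
    qed
  qed
qed

end

lemma J_fun_properties:
  assumes "\<And>t. t \<ge> 0 \<Longrightarrow> B_fun n A t = ereal (b t)"
    and "\<And>e. e > 0 \<Longrightarrow> \<forall>\<^sub>F t in at_right 0. b t \<le> e * t ^ n"
    and "gauge_function n \<phi>"
  shows "strict_mono_on {0<..} (J_fun n A \<phi>) \<and>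
         (J_fun n A \<phi> \<longlongrightarrow> 0) (at_right 0) \<and>
         filterlim (J_fun n A \<phi>) at_top at_top \<and>
         bij_betw (J_fun n A \<phi>) {0..} {0..}"
proof -
  have mono: "strict_mono_on {0<..} (J \<phi>)"
    by (rule monotone_on_subset[OF strict_mono_on_J[OF assms(3)]]) auto
  have at_0: "(J \<phi> \<longlongrightarrow> 0) (at_right 0)" by (rule J_tendsto_0[OF assms(3)])
  have at_infinity: "filterlim (J \<phi>) at_top at_top" by (rule J_at_top[OF assms(3,2)])
  have "bij_betw (J \<phi>) {0..} {0..}"
    by (rule strict_mono_on_bij_betw_nonneg[OF strict_mono_on_J[OF assms(3)] _
          continuous_on_J[OF assms(3)] at_0 at_infinity]) (simp add: J_def)
  with mono at_0 at_infinity show ?thesis by (simp add: J_fun_eq_J[OF assms(1)])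
qed

end
section \<open>Finite Young functions\<close>

locale finite_young =
  fixes A :: "real \<Rightarrow> ereal"
  assumes young: "young_function A" and finite_pos: "cond_C2 A"
begin

definition a :: "real \<Rightarrow> real" where "a t = real_of_ereal (A t)"

lemma A_zero: "A 0 = 0" using young by (simp add: young_function_def)

lemma A_eq: assumes "t \<ge> 0" shows "A t = ereal (a t)"
proof (cases "t = 0")
  case True then show ?thesis using A_zero by (simp add: a_def)
next
  case False
  then have "0 < A t" "A t < \<infinity>" using finite_pos assms unfolding cond_C2_def by auto
  then have "\<bar>A t\<bar> \<noteq> \<infinity>" by auto
  then show ?thesis by (simp add: a_def ereal_real')
qed

lemma a_zero: "a 0 = 0" using A_zero by (simp add: a_def)

lemma a_pos: "t > 0 \<Longrightarrow> a t > 0"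
  using finite_pos A_eq[of t] unfolding cond_C2_def by auto

lemma a_nonneg: "t \<ge> 0 \<Longrightarrow> a t \<ge> 0"
  using a_zero a_pos by (cases "t = 0") (auto intro: less_imp_le)

lemma a_convex: assumes "0 \<le> x" "0 \<le> y" "0 \<le> u" "u \<le> 1"
  shows "a ((1-u)*x + u*y) \<le> (1-u) * a x + u * a y"
proof -
  have "A ((1-u)*x + u*y) \<le> ereal (1-u) * A x + ereal u * A y"
    using young assms unfolding young_function_def by blast
  moreover have "(1-u)*x + u*y \<ge> 0" using assms by simp
  ultimately show ?thesis using assms by (simp add: A_eq)
qed

lemma a_scale_le: "0 \<le> u \<Longrightarrow> u \<le> 1 \<Longrightarrow> 0 \<le> t \<Longrightarrow> a (u*t) \<le> u * a t"
  using a_convex[of 0 t u] a_zero by simp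

lemma a_div_le: assumes "0 < s" "s \<le> t" shows "a s / s \<le> a t / t"
proof -
  have "a ((s/t)*t) \<le> (s/t) * a t" using assms by (intro a_scale_le) auto
  then show ?thesis using assms by (simp add: field_simps)
qed

lemma a_le: assumes "0 \<le> s" "s \<le> t" shows "a s \<le> a t"
proof (cases "t = 0")
  case False
  then have "a ((s/t)*t) \<le> (s/t) * a t" using assms by (intro a_scale_le) auto
  also have "\<dots> \<le> 1 * a t" using assms False a_nonneg[of t] by (intro mult_right_mono) auto
  finally show ?thesis using False by simp
qed (use assms in simp)

lemma continuous_on_a: "continuous_on {0<..} a"
proof (rule convex_on_continuous)
  show "convex_on {0<..} a"
    by (rule convex_onI) (use a_convex in auto)
qed simp

text \<open>Since \<open>a\<close> is sublinear near 0, the chord from a point \<open>r\<close> close to 0 to \<open>t\<close>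
  lies strictly below the chord from 0 to \<open>t\<close> at \<open>l * t\<close>.\<close>
lemma a_scale_less:
  assumes sublinear: "\<And>e. e > 0 \<Longrightarrow> \<forall>\<^sub>F t in at_right 0. a t \<le> e * t"
    and l: "0 < l" "l < 1" and t: "0 < t"
  shows "a (l*t) < l * a t"
proof -
  define e where "e = a t / (2*t)"
  have at: "a t > 0" using a_pos t by simp
  have e: "e > 0" using at t by (simp add: e_def)
  obtain d where d: "d > 0" "\<And>x. 0 < x \<Longrightarrow> x < d \<Longrightarrow> a x \<le> e*x"
    using sublinear[OF e] by (auto simp: eventually_at_right_field)
  define r where "r = min (d/2) (l*t/2)"
  have r: "r > 0" "r < d" "r < l*t" "r < t" using d l t
    by (auto simp: r_def min_def) (smt (verit) mult_less_cancel_right2)+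
  define u where "u = (l*t - r)/(t - r)"
  have u: "0 \<le> u" "u \<le> 1" using r l t by (auto simp: u_def field_simps)
  have "u*(t-r) = l*t - r" using r by (simp add: u_def)
  then have "(1-u)*r + u*t = l*t" by (simp add: algebra_simps)
  then have "a (l*t) \<le> (1-u)*a r + u*a t" using a_convex[of r t u] r t u by simp
  also have "(1-u)*a r \<le> (1-u)*(e*r)" using d r u by (intro mult_left_mono) auto
  also have "(1-u)*(e*r) = a t * ((1-l)*r/(2*(t-r)))" using r t
    by (simp add: u_def e_def field_simps)
  also have "\<dots> < a t * (l - u)"
  proof (rule mult_strict_left_mono[OF _ at])
    have "0 < r*(t-r)*(1-l)" using r l by simp
    then have "(1-l)*r/(2*(t-r)) < r*(1-l)/(t-r)" using r by (simp add: field_simps)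
    also have "r*(1-l)/(t-r) = l - u" using r by (simp add: u_def field_simps)
    finally show "(1-l)*r/(2*(t-r)) < l - u" .
  qed
  finally show ?thesis by (simp add: algebra_simps)
qed

lemma superhomogeneous_1:
  assumes "\<And>e. e > 0 \<Longrightarrow> \<forall>\<^sub>F t in at_right 0. a t \<le> e * t"
  shows "superhomogeneous 1 a"
  by unfold_locales (auto simp: a_zero a_pos continuous_on_a intro: a_scale_less assms)

end

lemma J_fun_properties_n_eq_1:
  assumes "young_function A" "cond_C2 A" "cond_C3 1 A" "gauge_function 1 \<phi>"
  shows "strict_mono_on {0<..} (J_fun 1 A \<phi>) \<and>
         (J_fun 1 A \<phi> \<longlongrightarrow> 0) (at_right 0) \<and>
         filterlim (J_fun 1 A \<phi>) at_top at_top \<and>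
         bij_betw (J_fun 1 A \<phi>) {0..} {0..}"
proof -
  interpret finite_young A using assms by unfold_locales
  have sublinear: "\<forall>\<^sub>F t in at_right 0. a t \<le> e * t" if e: "e > 0" for e
  proof -
    have "filterlim (\<lambda>t. t / a t) at_top (at_right 0)"
      using assms(3) by (simp add: cond_C3_def a_def)
    then have "\<forall>\<^sub>F t in at_right 0. 1/e \<le> t / a t"
      by (simp add: filterlim_at_top)
    moreover have "\<forall>\<^sub>F t in at_right 0. t > (0::real)"
      by (simp add: eventually_at_right_less)
    ultimately show ?thesis
    proof eventually_elim
      case (elim t)
      then show ?case using a_pos[of t] e by (simp add: field_simps)
    qed
  qed
  interpret superhomogeneous 1 a by (rule superhomogeneous_1[OF sublinear])
  show ?thesis
    by (rule J_fun_properties) (use assms sublinear in \<open>auto simp: B_fun_def A_eq\<close>)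
qed
section \<open>The case \<open>n \<ge> 2\<close>\<close>

text \<open>\<open>a\<close>, \<open>a_conj\<close>, \<open>e\<close> and \<open>b\<close> below are the real-valued \<open>A\<close>, \<open>\<tilde>A\<close>, \<open>E\<close> and \<open>B\<close> of the paper, \<open>p\<close> is
  \<open>n'\<close>, and \<open>tail t\<close> is the integral \<open>\<integral>\<^sub>t\<^sup>\<infinity> \<tilde>A(s) s\<^sup>-\<^sup>1\<^sup>-\<^sup>n\<^sup>' ds\<close>, so that \<open>E(t) = t\<^sup>n\<^sup>' tail t\<close>.\<close>
locale young_dim_ge_2 = finite_young +
  fixes n :: nat
  assumes n_ge_2: "n \<ge> 2" and C1: "cond_C1 n A" and C3: "cond_C3 n A"
begin

definition p :: real where "p = holder_conj n"
definition q :: real where "q = 1 / (real n - 1)"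

lemma p_eq: "p = 1 + q" and q_pos: "q > 0" and p_gt_1: "p > 1" and q_mult: "q * (real n - 1) = 1"
  using n_ge_2 by (auto simp: p_def q_def holder_conj_def field_simps)

lemma integrable_at_top:
  obtains t0 where "t0 > 0" "(\<integral>\<^sup>+ t\<in>{t0..}. ennreal ((t / a t) powr q) \<partial>lborel) < \<infinity>"
  using C1 n_ge_2 unfolding cond_C1_def by (auto simp: a_def q_def)

lemma not_integrable_at_0: "t0 > 0 \<Longrightarrow> (\<integral>\<^sup>+ t\<in>{0<..t0}. ennreal ((t / a t) powr q) \<partial>lborel) = \<infinity>"
  using C3 n_ge_2 unfolding cond_C3_def by (auto simp: a_def q_def)

text \<open>Otherwise \<open>a t / t\<close>, which is nondecreasing, would stay above some \<open>e > 0\<close>, and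
  \<open>(t / a t) powr q\<close> would be bounded near 0.\<close>
lemma a_sublinear: assumes e: "e > 0" shows "\<forall>\<^sub>F t in at_right 0. a t \<le> e * t"
  unfolding eventually_at_right_field
proof (rule ccontr)
  assume "\<not> (\<exists>d>0. \<forall>t>0. t < d \<longrightarrow> a t \<le> e * t)"
  then have H: "\<forall>d>0. \<exists>t. 0 < t \<and> t < d \<and> a t > e*t" by (auto simp: not_le)
  have big: "a t > e*t" if t: "t > 0" for t
  proof -
    obtain t' where t': "0 < t'" "t' < t" "a t' > e*t'" using H t by blast
    have "e < a t' / t'" using t' by (simp add: field_simps)
    also have "\<dots> \<le> a t / t" using t' by (intro a_div_le) auto
    finally show ?thesis using t by (simp add: field_simps)
  qed
  have "(\<integral>\<^sup>+ t\<in>{0<..1}. ennreal ((t / a t) powr q) \<partial>lborel)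
        \<le> (\<integral>\<^sup>+ t. ennreal ((1/e) powr q) * indicator {0<..1::real} t \<partial>lborel)"
  proof (rule nn_integral_mono)
    fix t :: real
    show "ennreal ((t / a t) powr q) * indicator {0<..1} t \<le> ennreal ((1/e) powr q) * indicator {0<..1} t"
    proof (cases "t \<in> {0<..1}")
      case True
      then have "t / a t \<le> 1/e" using big[of t] a_pos[of t] e by (simp add: field_simps)
      then have "(t / a t) powr q \<le> (1/e) powr q" using q_pos True a_pos[of t]
        by (intro powr_mono2) auto
      then show ?thesis using True by (simp add: ennreal_leI)
    qed simp
  qed
  also have "\<dots> < \<infinity>" by (simp add: nn_integral_cmult_indicator ennreal_mult_less_top)
  finally show False using not_integrable_at_0[of 1] by simp
qed

text \<open>Otherwise \<open>a t < M * t\<close> everywhere, by monotonicity of \<open>a t / t\<close>, and \<open>(t / a t) powr q\<close> would not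
  be integrable at infinity.\<close>
lemma a_superlinear: "\<exists>T>0. \<forall>t\<ge>T. a t \<ge> M*t"
proof (rule ccontr)
  assume "\<not> ?thesis"
  then have H: "\<forall>T>0. \<exists>t\<ge>T. a t < M*t" by (auto simp: not_le)
  have small: "a t < M*t" if t: "t > 0" for t
  proof -
    obtain t' where t': "t' \<ge> t" "a t' < M*t'" using H t by blast
    have "a t / t \<le> a t' / t'" using t' t by (intro a_div_le) auto
    also have "\<dots> < M" using t' t by (simp add: field_simps)
    finally show ?thesis using t by (simp add: field_simps)
  qed
  have M: "M > 0" using small[of 1] a_nonneg[of 1] by simp
  obtain t0 where t0: "t0 > 0" "(\<integral>\<^sup>+ t\<in>{t0..}. ennreal ((t / a t) powr q) \<partial>lborel) < \<infinity>"
    by (rule integrable_at_top)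
  have "(\<integral>\<^sup>+ t. ennreal ((1/M) powr q) * indicator {t0..} t \<partial>lborel)
        \<le> (\<integral>\<^sup>+ t\<in>{t0..}. ennreal ((t / a t) powr q) \<partial>lborel)"
  proof (rule nn_integral_mono)
    fix t :: real
    show "ennreal ((1/M) powr q) * indicator {t0..} t \<le> ennreal ((t / a t) powr q) * indicator {t0..} t"
    proof (cases "t \<in> {t0..}")
      case True
      then have "1/M \<le> t / a t" using small[of t] a_pos[of t] M t0 by (simp add: field_simps)
      then have "(1/M) powr q \<le> (t / a t) powr q" using q_pos M
        by (intro powr_mono2) auto
      then show ?thesis using True by (simp add: ennreal_leI)
    qed simp
  qed
  moreover have "(\<integral>\<^sup>+ t. ennreal ((1/M) powr q) * indicator {t0..} t \<partial>lborel) = \<infinity>"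
    using M by (simp add: nn_integral_cmult_indicator ennreal_mult_top emeasure_lborel_Ici)
  ultimately show False using t0 by simp
qed

definition a_conj :: "real \<Rightarrow> real" where "a_conj s = real_of_ereal (young_conj A s)"

lemma a_conj_basic:
  shows young_conj_eq: "young_conj A s = ereal (a_conj s)"
    and a_conj_ge: "\<And>\<tau>. \<tau> \<ge> 0 \<Longrightarrow> \<tau> * s - a \<tau> \<le> a_conj s"
    and a_conj_least: "\<And>y. (\<And>\<tau>. \<tau> \<ge> 0 \<Longrightarrow> \<tau> * s - a \<tau> \<le> y) \<Longrightarrow> a_conj s \<le> y"
proof -
  obtain T where T: "T > 0" "\<And>t. t \<ge> T \<Longrightarrow> a t \<ge> (\<bar>s\<bar>+1)*t" using a_superlinear by blast
  have bounded: "\<tau> * s - a \<tau> \<le> T * \<bar>s\<bar>" if "\<tau> \<ge> 0" for \<tau>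
  proof (cases "\<tau> \<ge> T")
    case True
    have "\<tau> * s \<le> \<tau> * \<bar>s\<bar>" using that by (intro mult_left_mono) auto
    then have "\<tau> * s - a \<tau> \<le> \<tau> * \<bar>s\<bar> - (\<bar>s\<bar>+1)*\<tau>"
      using T(2)[OF True] by linarith
    also have "\<dots> \<le> 0" using that by (simp add: algebra_simps)
    finally have "\<tau> * s - a \<tau> \<le> 0" .
    moreover have "0 \<le> T * \<bar>s\<bar>" using T(1) by simp
    ultimately show ?thesis by linarith
  next
    case False
    have "\<tau> * s \<le> \<tau> * \<bar>s\<bar>" using that by (intro mult_left_mono) auto
    also have "\<dots> \<le> T * \<bar>s\<bar>" using False by (intro mult_right_mono) auto
    finally show ?thesis using a_nonneg[OF that] by simp
  qed
  note conj = young_conj_real[where H=A and h=a and t=s, OF A_eq bounded]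
  show "young_conj A s = ereal (a_conj s)" using conj(1) by (simp add: a_conj_def)
  show "\<tau> * s - a \<tau> \<le> a_conj s" if "\<tau> \<ge> 0" for \<tau>
    unfolding a_conj_def by (rule conj(2)) (use that in auto)
  show "a_conj s \<le> y" if "\<And>\<tau>. \<tau> \<ge> 0 \<Longrightarrow> \<tau> * s - a \<tau> \<le> y" for y
    unfolding a_conj_def by (rule conj(3)) (use that in auto)
qed

lemma a_conj_nonneg: "a_conj s \<ge> 0"
  using a_conj_ge[of 0 s] a_zero by simp

lemma mono_a_conj: "mono a_conj"
proof (rule monoI, rule a_conj_least)
  fix s s' \<tau> :: real assume "s \<le> s'" "\<tau> \<ge> 0"
  then show "\<tau> * s - a \<tau> \<le> a_conj s'"
    using a_conj_ge[of \<tau> s'] mult_left_mono[of s s' \<tau>] by simp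
qed

lemma a_conj_le: "s \<le> s' \<Longrightarrow> a_conj s \<le> a_conj s'"
  using mono_a_conj by (rule monoD)

lemma borel_measurable_a_conj[measurable]: "a_conj \<in> borel_measurable borel"
  using mono_a_conj by (rule borel_measurable_mono)

lemma a_conj_scale_le: assumes "0 \<le> u" "u \<le> 1" shows "a_conj (u * s) \<le> u * a_conj s"
proof (rule a_conj_least)
  fix \<tau> :: real assume \<tau>: "\<tau> \<ge> 0"
  have "\<tau> * (u * s) - a \<tau> = u * (\<tau> * s - a \<tau>) - (1-u) * a \<tau>" by (simp add: algebra_simps)
  also have "\<dots> \<le> u * (\<tau> * s - a \<tau>)" using assms a_nonneg[OF \<tau>] by simp
  also have "\<dots> \<le> u * a_conj s" using assms a_conj_ge[OF \<tau>, of s] by (intro mult_left_mono) auto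
  finally show "\<tau> * (u * s) - a \<tau> \<le> u * a_conj s" .
qed

lemma a_conj_pos: assumes s: "s > 0" shows "a_conj s > 0"
proof -
  obtain d where d: "d > 0" "\<And>t. 0 < t \<Longrightarrow> t < d \<Longrightarrow> a t \<le> (s/2) * t"
    using a_sublinear[of "s/2"] s by (auto simp: eventually_at_right_field)
  have "0 < (d/2) * s - (s/2) * (d/2)" using d s by simp
  also have "\<dots> \<le> (d/2) * s - a (d/2)" using d(2)[of "d/2"] d(1) by (simp add: mult.commute)
  also have "\<dots> \<le> a_conj s" using d by (intro a_conj_ge) auto
  finally show ?thesis .
qed

lemma a_conj_sublinear:
  assumes e: "e > 0" shows "\<exists>\<sigma>>0. \<forall>s. 0 \<le> s \<and> s \<le> \<sigma> \<longrightarrow> a_conj s \<le> e * s"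
proof (intro exI[of _ "a e / e"] conjI allI impI)
  show "a e / e > 0" using a_pos[OF e] e by simp
  fix s assume s: "0 \<le> s \<and> s \<le> a e / e"
  show "a_conj s \<le> e * s"
  proof (rule a_conj_least)
    fix \<tau> :: real assume \<tau>: "\<tau> \<ge> 0"
    show "\<tau> * s - a \<tau> \<le> e * s"
    proof (cases "\<tau> \<ge> e")
      case True
      have "s \<le> a e / e" using s by simp
      also have "\<dots> \<le> a \<tau> / \<tau>" using True e by (intro a_div_le) auto
      finally have "\<tau> * s \<le> a \<tau>" using True e by (simp add: field_simps)
      then show ?thesis using s e mult_nonneg_nonneg[of e s] by linarith
    next
      case False
      have "\<tau> * s \<le> e * s" using False s by (intro mult_right_mono) auto
      then show ?thesis using a_nonneg[OF \<tau>] by simp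
    qed
  qed
qed

text \<open>\<open>a_ext\<close> agrees with \<open>a\<close> on \<open>[0,\<infinity>)\<close> and is Borel measurable on all of \<open>\<real>\<close>; the values of \<open>A\<close>
  on negative arguments are unconstrained.\<close>
definition a_ext :: "real \<Rightarrow> real" where "a_ext t = a (max 0 t)"

lemma borel_measurable_a_ext[measurable]: "a_ext \<in> borel_measurable borel"
  by (rule borel_measurable_mono) (auto intro!: monoI a_le simp: a_ext_def)

lemma a_ext_eq: "t \<ge> 0 \<Longrightarrow> a_ext t = a t"
  by (simp add: a_ext_def)

definition tail_density :: "real \<Rightarrow> ennreal" where
  "tail_density s = ennreal (a_conj s) * ennreal (s powr (-1-p))"

lemma borel_measurable_tail_density[measurable]: "tail_density \<in> borel_measurable borel"
  unfolding tail_density_def by measurable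

definition tail :: "real \<Rightarrow> ennreal" where
  "tail t = (\<integral>\<^sup>+ s. tail_density s * indicator {t..} s \<partial>lborel)"

lemma E_fun_eq_tail: "E_fun n A t = enn2ereal (ennreal (t powr p) * tail t)"
  unfolding E_fun_def tail_def tail_density_def p_def by (simp add: young_conj_eq)

lemma tail_split: assumes "x \<le> y"
  shows "tail x = (\<integral>\<^sup>+ s. tail_density s * indicator {x..<y} s \<partial>lborel) + tail y"
proof -
  have "tail x = (\<integral>\<^sup>+ s. tail_density s * indicator {x..<y} s + tail_density s * indicator {y..} s \<partial>lborel)"
    unfolding tail_def using assms
    by (intro nn_integral_cong) (auto split: split_indicator simp: not_le)
  also have "\<dots> = (\<integral>\<^sup>+ s. tail_density s * indicator {x..<y} s \<partial>lborel) + tail y"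
    unfolding tail_def by (rule nn_integral_add) auto
  finally show ?thesis .
qed

lemma tail_antimono: "x \<le> y \<Longrightarrow> tail y \<le> tail x"
  using tail_split[of x y] by simp

lemma powr_mult_self: "s > 0 \<Longrightarrow> s * s powr (-1-p) = s powr (-p)"
  using powr_add[of s 1 "-1-p"] by simp

lemma a_conj_le_measure: assumes s: "s > 0"
  shows "ennreal (a_conj s) \<le> ennreal s * emeasure lborel {\<tau>. 0 \<le> \<tau> \<and> a_ext \<tau> < s * \<tau>}"
proof (cases "emeasure lborel {\<tau>. 0 \<le> \<tau> \<and> a_ext \<tau> < s * \<tau>}")
  case (real r)
  have "a_conj s \<le> s * r"
  proof (rule a_conj_least)
    fix \<tau> :: real assume \<tau>: "\<tau> \<ge> 0"
    show "\<tau> * s - a \<tau> \<le> s * r"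
    proof (cases "a \<tau> < s * \<tau>")
      case True
      have meas: "{\<tau>. 0 \<le> \<tau> \<and> a_ext \<tau> < s * \<tau>} \<in> sets lborel" by measurable
      have "{0<..<\<tau>} \<subseteq> {\<tau>. 0 \<le> \<tau> \<and> a_ext \<tau> < s * \<tau>}"
      proof
        fix x assume x: "x \<in> {0<..<\<tau>}"
        have "a x / x \<le> a \<tau> / \<tau>" using x by (intro a_div_le) auto
        also have "\<dots> < s" using True x by (simp add: field_simps)
        finally show "x \<in> {\<tau>. 0 \<le> \<tau> \<and> a_ext \<tau> < s * \<tau>}" using x by (simp add: a_ext_eq field_simps)
      qed
      then have "emeasure lborel {0<..<\<tau>} \<le> ennreal r"
        using emeasure_mono[OF _ meas] real by metis
      then have "\<tau> \<le> r" using \<tau> real by (simp add: ennreal_le_iff)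
      then have "\<tau> * s \<le> s * r" using s by (simp add: mult.commute)
      then show ?thesis using a_nonneg[OF \<tau>] by simp
    next
      case False
      have "0 \<le> s * r" using real s by simp
      then show ?thesis using False by (simp add: mult.commute)
    qed
  qed
  then show ?thesis using real s by (simp add: ennreal_mult[symmetric] ennreal_leI)
next
  case top
  then show ?thesis using s by (simp add: ennreal_mult_top)
qed

lemma tail_density_le_measure: assumes s: "s > 0"
  shows "tail_density s \<le> ennreal (s powr (-p)) * emeasure lborel {\<tau>. 0 \<le> \<tau> \<and> a_ext \<tau> < s * \<tau>}"
proof -
  have "tail_density s \<le> (ennreal s * emeasure lborel {\<tau>. 0 \<le> \<tau> \<and> a_ext \<tau> < s * \<tau>}) * ennreal (s powr (-1-p))"
    unfolding tail_density_def using s by (intro mult_right_mono a_conj_le_measure) auto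
  also have "\<dots> = (ennreal s * ennreal (s powr (-1-p))) * emeasure lborel {\<tau>. 0 \<le> \<tau> \<and> a_ext \<tau> < s * \<tau>}"
    by (simp add: mult_ac)
  also have "ennreal s * ennreal (s powr (-1-p)) = ennreal (s powr (-p))"
    using s powr_mult_self[OF s] by (simp add: ennreal_mult[symmetric])
  finally show ?thesis .
qed

lemma powr_tail_le: assumes \<tau>: "\<tau> > 0"
  shows "(\<integral>\<^sup>+ s. ennreal (s powr (-p)) * indicator {s. 1 \<le> s \<and> a \<tau> < s * \<tau>} s \<partial>lborel)
    \<le> ennreal ((real n - 1) * min 1 ((\<tau> / a \<tau>) powr q))"
proof -
  define m where "m = max 1 (a \<tau> / \<tau>)"
  have m: "m \<ge> 1" "m \<ge> a \<tau> / \<tau>" by (auto simp: m_def)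
  have a\<tau>: "a \<tau> > 0" using a_pos \<tau> by simp
  have "(\<integral>\<^sup>+ s. ennreal (s powr (-p)) * indicator {s. 1 \<le> s \<and> a \<tau> < s * \<tau>} s \<partial>lborel)
      \<le> (\<integral>\<^sup>+ s. ennreal (s powr (-p)) * indicator {m..} s \<partial>lborel)"
    using \<tau> by (intro nn_integral_mono) (auto simp: m_def field_simps split: split_indicator)
  also have "\<dots> = ennreal (m powr (1-p) / (p-1))"
    using m p_gt_1 by (intro nn_integral_powr_Ici) auto
  also have "m powr (1-p) / (p-1) = (1 / q) * m powr (-q)"
    by (simp add: p_eq)
  also have "1 / q = real n - 1" using q_mult q_pos by (simp add: field_simps)
  also have "m powr (-q) \<le> min 1 ((\<tau> / a \<tau>) powr q)"
  proof -
    have "m powr (-q) \<le> 1" using powr_mono2'[of "-q" 1 m] m q_pos by simp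
    moreover have "m powr (-q) \<le> (a \<tau> / \<tau>) powr (-q)"
      using powr_mono2'[of "-q" "a \<tau> / \<tau>" m] m q_pos a\<tau> \<tau> by simp
    moreover have "(a \<tau> / \<tau>) powr (-q) = (\<tau> / a \<tau>) powr q"
      using a\<tau> \<tau> by (simp add: powr_divide powr_minus_divide)
    ultimately show ?thesis by simp
  qed
  then have "ennreal ((real n - 1) * m powr (-q)) \<le> ennreal ((real n - 1) * min 1 ((\<tau> / a \<tau>) powr q))"
    using n_ge_2 by (intro ennreal_leI mult_left_mono) auto
  finally show ?thesis .
qed

lemma min_powr_integrable:
  "(\<integral>\<^sup>+ \<tau>. ennreal (min 1 ((\<tau> / a_ext \<tau>) powr q)) * indicator {0<..} \<tau> \<partial>lborel) < \<infinity>"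
proof -
  obtain t0 where t0: "t0 > 0" "(\<integral>\<^sup>+ t\<in>{t0..}. ennreal ((t / a t) powr q) \<partial>lborel) < \<infinity>"
    by (rule integrable_at_top)
  have "(\<integral>\<^sup>+ \<tau>. ennreal (min 1 ((\<tau> / a_ext \<tau>) powr q)) * indicator {0<..} \<tau> \<partial>lborel)
      \<le> (\<integral>\<^sup>+ \<tau>. indicator {0..t0} \<tau> + ennreal ((\<tau> / a_ext \<tau>) powr q) * indicator {t0..} \<tau> \<partial>lborel)"
    by (intro nn_integral_mono) (auto split: split_indicator intro: ennreal_leI add_increasing2)
  also have "\<dots> = emeasure lborel {0..t0} + (\<integral>\<^sup>+ t\<in>{t0..}. ennreal ((t / a t) powr q) \<partial>lborel)"
    using t0 by (subst nn_integral_add)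
      (auto intro!: nn_integral_cong split: split_indicator simp: a_ext_eq)
  also have "\<dots> < \<infinity>" using t0 by simp
  finally show ?thesis .
qed

text \<open>The region \<open>{(\<tau>, s). a \<tau> < s * \<tau>, 1 \<le> s}\<close> with weight \<open>s powr (-p)\<close>: integrating out \<open>\<tau>\<close> bounds
  \<open>tail 1\<close> (by \<open>tail_density_le_measure\<close>), integrating out \<open>s\<close> gives \<open>powr_tail_le\<close>.\<close>
definition sublevel_weight :: "real \<times> real \<Rightarrow> ennreal" where
  "sublevel_weight x =
    (if 0 \<le> fst x \<and> a_ext (fst x) < snd x * fst x \<and> 1 \<le> snd x then ennreal (snd x powr (-p)) else 0)"

lemma borel_measurable_sublevel_weight[measurable]:
  "sublevel_weight \<in> borel_measurable (lborel \<Otimes>\<^sub>M lborel)"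
  unfolding sublevel_weight_def by measurable

lemma tail_1_le_sublevel_weight:
  "tail 1 \<le> (\<integral>\<^sup>+ \<tau>. (\<integral>\<^sup>+ s. sublevel_weight (\<tau>, s) \<partial>lborel) \<partial>lborel)"
proof -
  have "tail 1 \<le> (\<integral>\<^sup>+ s. (\<integral>\<^sup>+ \<tau>. sublevel_weight (\<tau>, s) \<partial>lborel) \<partial>lborel)"
    unfolding tail_def
  proof (rule nn_integral_mono)
    fix s :: real
    have meas: "{\<tau>. 0 \<le> \<tau> \<and> a_ext \<tau> < s * \<tau>} \<in> sets lborel" by measurable
    have "1 \<le> s \<Longrightarrow> (\<integral>\<^sup>+ \<tau>. sublevel_weight (\<tau>, s) \<partial>lborel)
        = (\<integral>\<^sup>+ \<tau>. ennreal (s powr (-p)) * indicator {\<tau>. 0 \<le> \<tau> \<and> a_ext \<tau> < s * \<tau>} \<tau> \<partial>lborel)"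
      by (intro nn_integral_cong) (auto simp: sublevel_weight_def split: split_indicator)
    then show "tail_density s * indicator {1..} s \<le> (\<integral>\<^sup>+ \<tau>. sublevel_weight (\<tau>, s) \<partial>lborel)"
      using tail_density_le_measure[of s]
      by (simp add: nn_integral_cmult_indicator[OF meas] split: split_indicator)
  qed
  also have "\<dots> = (\<integral>\<^sup>+ \<tau>. (\<integral>\<^sup>+ s. sublevel_weight (\<tau>, s) \<partial>lborel) \<partial>lborel)"
    by (intro lborel_pair.Fubini') (simp add: case_prod_eta)
  finally show ?thesis .
qed

lemma sublevel_weight_integrable:
  "(\<integral>\<^sup>+ \<tau>. (\<integral>\<^sup>+ s. sublevel_weight (\<tau>, s) \<partial>lborel) \<partial>lborel) < \<infinity>"
proof -
  have "(\<integral>\<^sup>+ s. sublevel_weight (\<tau>, s) \<partial>lborel)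
      \<le> ennreal (real n - 1) * (ennreal (min 1 ((\<tau> / a_ext \<tau>) powr q)) * indicator {0<..} \<tau>)" for \<tau>
  proof (cases "\<tau> > 0")
    case False
    then have "sublevel_weight (\<tau>, s) = 0" for s using a_zero by (auto simp: sublevel_weight_def a_ext_def)
    then show ?thesis by simp
  next
    case True
    have "(\<integral>\<^sup>+ s. sublevel_weight (\<tau>, s) \<partial>lborel)
        = (\<integral>\<^sup>+ s. ennreal (s powr (-p)) * indicator {s. 1 \<le> s \<and> a \<tau> < s * \<tau>} s \<partial>lborel)"
      using True by (intro nn_integral_cong) (auto simp: sublevel_weight_def a_ext_eq split: split_indicator)
    also have "\<dots> \<le> ennreal ((real n - 1) * min 1 ((\<tau> / a \<tau>) powr q))"
      using True by (rule powr_tail_le)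
    finally show ?thesis using True n_ge_2 by (simp add: a_ext_eq ennreal_mult)
  qed
  then have "(\<integral>\<^sup>+ \<tau>. (\<integral>\<^sup>+ s. sublevel_weight (\<tau>, s) \<partial>lborel) \<partial>lborel)
      \<le> ennreal (real n - 1) * (\<integral>\<^sup>+ \<tau>. ennreal (min 1 ((\<tau> / a_ext \<tau>) powr q)) * indicator {0<..} \<tau> \<partial>lborel)"
    by (subst nn_integral_cmult[symmetric]) (auto intro: nn_integral_mono)
  also have "\<dots> < \<infinity>" using min_powr_integrable by (simp add: ennreal_mult_less_top)
  finally show ?thesis .
qed

lemma tail_1_finite: "tail 1 < \<infinity>"
  using tail_1_le_sublevel_weight sublevel_weight_integrable by (rule le_less_trans)

lemma tail_density_ge_measure: assumes s: "s > 0"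
  shows "ennreal (s powr (-p) / 2) * emeasure lborel {\<tau>. 0 < \<tau> \<and> 2 * a_ext \<tau> \<le> s * \<tau>} \<le> tail_density s"
proof -
  have "{\<tau>. 0 < \<tau> \<and> 2 * a_ext \<tau> \<le> s * \<tau>} \<subseteq> {0..2 * a_conj s / s}"
  proof
    fix \<tau> assume "\<tau> \<in> {\<tau>. 0 < \<tau> \<and> 2 * a_ext \<tau> \<le> s * \<tau>}"
    then have \<tau>: "\<tau> > 0" "2 * a \<tau> \<le> s * \<tau>" by (auto simp: a_ext_eq)
    have "\<tau> * s - a \<tau> \<le> a_conj s" using \<tau> by (intro a_conj_ge) auto
    then have "\<tau> * s \<le> 2 * a_conj s" using \<tau> by (simp add: algebra_simps)
    then show "\<tau> \<in> {0..2 * a_conj s / s}" using \<tau> s by (simp add: field_simps)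
  qed
  then have "emeasure lborel {\<tau>. 0 < \<tau> \<and> 2 * a_ext \<tau> \<le> s * \<tau>} \<le> ennreal (2 * a_conj s / s)"
    using emeasure_mono[of _ "{0..2 * a_conj s / s}" lborel] s a_conj_nonneg[of s] by simp
  then have "ennreal (s powr (-p) / 2) * emeasure lborel {\<tau>. 0 < \<tau> \<and> 2 * a_ext \<tau> \<le> s * \<tau>}
      \<le> ennreal (s powr (-p) / 2) * ennreal (2 * a_conj s / s)"
    by (rule mult_left_mono) simp
  also have "s powr (-p) / 2 * (2 * a_conj s / s) = a_conj s * s powr (-1-p)"
    using powr_mult_self[OF s] s by (simp add: field_simps)
  then have "ennreal (s powr (-p) / 2) * ennreal (2 * a_conj s / s) = tail_density s"
    using s a_conj_nonneg[of s] by (simp add: tail_density_def ennreal_mult[symmetric])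
  finally show ?thesis .
qed

lemma powr_band_ge: assumes \<tau>: "0 < \<tau>" "4 * a \<tau> \<le> \<tau>"
  shows "ennreal (2 powr (-p-q) / 2 * (\<tau> / a \<tau>) powr q)
    \<le> (\<integral>\<^sup>+ s. ennreal (s powr (-p) / 2) * indicator {s. 2 * a \<tau> \<le> s * \<tau> \<and> 0 < s \<and> s \<le> 1} s \<partial>lborel)"
proof -
  have a\<tau>: "a \<tau> > 0" using a_pos \<tau> by simp
  define m where "m = 2 * a \<tau> / \<tau>"
  have m: "m > 0" "2 * m \<le> 1" using a\<tau> \<tau> by (auto simp: m_def field_simps)
  have "(2*m) powr (-p) / 2 * m = 2 powr (-p-q) / 2 * (\<tau> / a \<tau>) powr q"
  proof -
    have "(2*m) powr (-p) * m = 2 powr (-p) * (m powr (-p) * m)" using m by (simp add: powr_mult)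
    also have "m powr (-p) * m = m powr (-q)" using powr_add[of m "-p" 1] m by (simp add: p_eq)
    also have "m powr (-q) = 2 powr (-q) * (\<tau> / a \<tau>) powr q"
      using a\<tau> \<tau> unfolding m_def by (simp add: powr_minus_divide powr_divide powr_mult field_simps)
    finally show ?thesis by (simp add: powr_diff powr_minus field_simps)
  qed
  then have "ennreal (2 powr (-p-q) / 2 * (\<tau> / a \<tau>) powr q)
      = (\<integral>\<^sup>+ s. ennreal ((2*m) powr (-p) / 2) * indicator {m..2*m} s \<partial>lborel)"
    using m by (simp add: nn_integral_cmult_indicator ennreal_mult[symmetric])
  also have "\<dots> \<le> (\<integral>\<^sup>+ s. ennreal (s powr (-p) / 2) * indicator {s. 2 * a \<tau> \<le> s * \<tau> \<and> 0 < s \<and> s \<le> 1} s \<partial>lborel)"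
  proof (rule nn_integral_mono)
    fix s :: real
    show "ennreal ((2*m) powr (-p) / 2) * indicator {m..2*m} s
        \<le> ennreal (s powr (-p) / 2) * indicator {s. 2 * a \<tau> \<le> s * \<tau> \<and> 0 < s \<and> s \<le> 1} s"
    proof (cases "s \<in> {m..2*m}")
      case True
      then have "2 * a \<tau> \<le> s * \<tau>" using \<tau> by (simp add: m_def field_simps)
      moreover have "(2*m) powr (-p) \<le> s powr (-p)" using True m p_gt_1 by (intro powr_mono2') auto
      ultimately show ?thesis using True m by (auto intro!: ennreal_leI)
    qed simp
  qed
  finally show ?thesis .
qed

text \<open>The region \<open>{(\<tau>, s). 2 * a \<tau> \<le> s * \<tau>, 0 < s \<le> 1}\<close> with weight \<open>s powr (-p) / 2\<close>: integrating out
  \<open>\<tau>\<close> stays below the tail density (\<open>tail_density_ge_measure\<close>), integrating out \<open>s\<close> gives at least a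
  multiple of \<open>(\<tau> / a \<tau>) powr q\<close> near 0 (\<open>powr_band_ge\<close>), which (C3) makes non-integrable.\<close>
definition band_weight :: "real \<times> real \<Rightarrow> ennreal" where
  "band_weight x = (if 0 < fst x \<and> 2 * a_ext (fst x) \<le> snd x * fst x \<and> 0 < snd x \<and> snd x \<le> 1
      then ennreal (snd x powr (-p) / 2) else 0)"

lemma borel_measurable_band_weight[measurable]: "band_weight \<in> borel_measurable (lborel \<Otimes>\<^sub>M lborel)"
  unfolding band_weight_def by measurable

lemma band_weight_le_tail_density:
  "(\<integral>\<^sup>+ \<tau>. (\<integral>\<^sup>+ s. band_weight (\<tau>, s) \<partial>lborel) \<partial>lborel) \<le> (\<integral>\<^sup>+ s. tail_density s * indicator {0<..1} s \<partial>lborel)"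
proof -
  have "(\<integral>\<^sup>+ \<tau>. (\<integral>\<^sup>+ s. band_weight (\<tau>, s) \<partial>lborel) \<partial>lborel)
      = (\<integral>\<^sup>+ s. (\<integral>\<^sup>+ \<tau>. band_weight (\<tau>, s) \<partial>lborel) \<partial>lborel)"
    by (intro lborel_pair.Fubini'[symmetric]) (simp add: case_prod_eta)
  also have "\<dots> \<le> (\<integral>\<^sup>+ s. tail_density s * indicator {0<..1} s \<partial>lborel)"
  proof (rule nn_integral_mono)
    fix s :: real
    have meas: "{\<tau>. 0 < \<tau> \<and> 2 * a_ext \<tau> \<le> s * \<tau>} \<in> sets lborel" by measurable
    have "s \<in> {0<..1} \<Longrightarrow> (\<integral>\<^sup>+ \<tau>. band_weight (\<tau>, s) \<partial>lborel)
        = (\<integral>\<^sup>+ \<tau>. ennreal (s powr (-p) / 2) * indicator {\<tau>. 0 < \<tau> \<and> 2 * a_ext \<tau> \<le> s * \<tau>} \<tau> \<partial>lborel)"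
      by (intro nn_integral_cong) (auto simp: band_weight_def split: split_indicator)
    then show "(\<integral>\<^sup>+ \<tau>. band_weight (\<tau>, s) \<partial>lborel) \<le> tail_density s * indicator {0<..1} s"
      using tail_density_ge_measure[of s]
      by (cases "s \<in> {0<..1}") (auto simp: nn_integral_cmult_indicator[OF meas] band_weight_def)
  qed
  finally show ?thesis .
qed

lemma band_weight_not_integrable: "(\<integral>\<^sup>+ \<tau>. (\<integral>\<^sup>+ s. band_weight (\<tau>, s) \<partial>lborel) \<partial>lborel) = \<infinity>"
proof -
  obtain \<delta> where \<delta>: "\<delta> > 0" "\<And>t. 0 < t \<Longrightarrow> t < \<delta> \<Longrightarrow> a t \<le> (1/4) * t"
    using a_sublinear[of "1/4"] by (auto simp: eventually_at_right_field)
  define \<kappa> where "\<kappa> = 2 powr (-p-q) / 2"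
  have \<kappa>: "\<kappa> > 0" by (simp add: \<kappa>_def)
  have "\<infinity> = ennreal \<kappa> * (\<integral>\<^sup>+ t\<in>{0<..\<delta>/2}. ennreal ((t / a t) powr q) \<partial>lborel)"
    using not_integrable_at_0[of "\<delta>/2"] \<delta> \<kappa> by (simp add: ennreal_mult_top)
  also have "(\<integral>\<^sup>+ t\<in>{0<..\<delta>/2}. ennreal ((t / a t) powr q) \<partial>lborel)
      = (\<integral>\<^sup>+ \<tau>. ennreal ((\<tau> / a_ext \<tau>) powr q) * indicator {0<..\<delta>/2} \<tau> \<partial>lborel)"
    by (intro nn_integral_cong) (auto split: split_indicator simp: a_ext_eq)
  also have "ennreal \<kappa> * \<dots>
      = (\<integral>\<^sup>+ \<tau>. ennreal \<kappa> * (ennreal ((\<tau> / a_ext \<tau>) powr q) * indicator {0<..\<delta>/2} \<tau>) \<partial>lborel)"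
    by (rule nn_integral_cmult[symmetric]) measurable
  also have "\<dots> \<le> (\<integral>\<^sup>+ \<tau>. (\<integral>\<^sup>+ s. band_weight (\<tau>, s) \<partial>lborel) \<partial>lborel)"
  proof (rule nn_integral_mono)
    fix \<tau> :: real
    show "ennreal \<kappa> * (ennreal ((\<tau> / a_ext \<tau>) powr q) * indicator {0<..\<delta>/2} \<tau>)
        \<le> (\<integral>\<^sup>+ s. band_weight (\<tau>, s) \<partial>lborel)"
    proof (cases "\<tau> \<in> {0<..\<delta>/2}")
      case True
      then have "4 * a \<tau> \<le> \<tau>" using \<delta>(2)[of \<tau>] \<delta>(1) by simp
      then have "ennreal (\<kappa> * (\<tau> / a \<tau>) powr q)
          \<le> (\<integral>\<^sup>+ s. ennreal (s powr (-p) / 2) * indicator {s. 2 * a \<tau> \<le> s * \<tau> \<and> 0 < s \<and> s \<le> 1} s \<partial>lborel)"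
        using True unfolding \<kappa>_def by (intro powr_band_ge) auto
      also have "\<dots> = (\<integral>\<^sup>+ s. band_weight (\<tau>, s) \<partial>lborel)"
        using True by (intro nn_integral_cong) (auto simp: band_weight_def a_ext_eq split: split_indicator)
      finally show ?thesis using True \<kappa> by (simp add: a_ext_eq ennreal_mult)
    qed simp
  qed
  finally show ?thesis by (simp add: top_unique)
qed

lemma tail_density_not_integrable_at_0: "(\<integral>\<^sup>+ s. tail_density s * indicator {0<..1} s \<partial>lborel) = \<infinity>"
  using band_weight_le_tail_density band_weight_not_integrable by (simp add: top_unique)

lemma SUP_tail: "(SUP k. tail (1 / Suc k)) = (\<integral>\<^sup>+ s. tail_density s * indicator {0<..} s \<partial>lborel)"
proof -
  define f where "f k s = tail_density s * indicator {1 / Suc k..} s" for k :: nat and s :: real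
  have "incseq f"
  proof (rule incseq_SucI, rule le_funI)
    fix k s
    have "1 / real (Suc (Suc k)) \<le> 1 / Suc k" by (simp add: frac_le)
    then show "f k s \<le> f (Suc k) s" unfolding f_def
      by (auto split: split_indicator intro: mult_left_mono)
  qed
  moreover have "f k \<in> borel_measurable lborel" for k unfolding f_def by measurable
  ultimately have limit: "(\<integral>\<^sup>+ s. (SUP k. f k s) \<partial>lborel) = (SUP k. integral\<^sup>N lborel (f k))"
    by (rule nn_integral_monotone_convergence_SUP)
  have pointwise: "(SUP k. f k s) = tail_density s * indicator {0<..} s" for s
  proof (cases "s > 0")
    case True
    obtain k :: nat where "1 / Suc k < s" using True by (meson nat_approx_posE)
    then have "tail_density s * indicator {0<..} s \<le> (SUP k. f k s)"
      using True by (intro SUP_upper2[of k]) (auto simp: f_def)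
    moreover have "(SUP k. f k s) \<le> tail_density s * indicator {0<..} s"
      using True by (intro SUP_least) (auto simp: f_def split: split_indicator)
    ultimately show ?thesis by simp
  next
    case False
    have "\<not> 1 / real (Suc k) \<le> s" for k
      using False divide_pos_pos[of 1 "real (Suc k)"] by linarith
    then have "f k s = 0" for k by (simp add: f_def)
    then show ?thesis using False by simp
  qed
  have "integral\<^sup>N lborel (f k) = tail (1 / Suc k)" for k
    unfolding tail_def f_def[abs_def] by simp
  then show ?thesis using limit unfolding pointwise by simp
qed

lemma tail_unbounded_at_0: "\<exists>\<delta>>0. \<forall>\<tau>. 0 < \<tau> \<and> \<tau> \<le> \<delta> \<longrightarrow> ennreal M \<le> tail \<tau>"
proof -
  have "(\<integral>\<^sup>+ s. tail_density s * indicator {0<..1} s \<partial>lborel) \<le> (\<integral>\<^sup>+ s. tail_density s * indicator {0<..} s \<partial>lborel)"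
    by (intro nn_integral_mono) (auto split: split_indicator)
  then have "\<infinity> \<le> (\<integral>\<^sup>+ s. tail_density s * indicator {0<..} s \<partial>lborel)"
    using tail_density_not_integrable_at_0 by simp
  then have "(SUP k. tail (1 / Suc k)) = \<infinity>"
    unfolding SUP_tail by (simp add: top_unique)
  then have "ennreal M < (SUP k. tail (1 / Suc k))" by (metis ennreal_less_top infinity_ennreal_def)
  then obtain k where k: "ennreal M < tail (1 / Suc k)"
    unfolding less_SUP_iff by blast
  show ?thesis
  proof (intro exI[of _ "1 / Suc k"] conjI allI impI)
    fix \<tau> assume "0 < \<tau> \<and> \<tau> \<le> 1 / Suc k"
    then show "ennreal M \<le> tail \<tau>" using k tail_antimono[of \<tau> "1 / Suc k"] by simp
  qed simp
qed

lemma tail_ge: assumes "0 < x" "x \<le> y"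
  shows "ennreal (a_conj x * y powr (-1-p) * (y - x)) + tail y \<le> tail x"
proof -
  have "ennreal (a_conj x * y powr (-1-p) * (y - x))
      = (\<integral>\<^sup>+ s. ennreal (a_conj x * y powr (-1-p)) * indicator {x..<y} s \<partial>lborel)"
    using assms a_conj_nonneg[of x] by (simp add: nn_integral_cmult_indicator ennreal_mult[symmetric])
  also have "\<dots> \<le> (\<integral>\<^sup>+ s. tail_density s * indicator {x..<y} s \<partial>lborel)"
  proof (rule nn_integral_mono)
    fix s :: real
    show "ennreal (a_conj x * y powr (-1-p)) * indicator {x..<y} s \<le> tail_density s * indicator {x..<y} s"
    proof (cases "s \<in> {x..<y}")
      case True
      have "a_conj x \<le> a_conj s" using True by (intro a_conj_le) auto
      moreover have "y powr (-1-p) \<le> s powr (-1-p)" using True assms p_gt_1 by (intro powr_mono2') auto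
      ultimately have "a_conj x * y powr (-1-p) \<le> a_conj s * s powr (-1-p)"
        using a_conj_nonneg[of x] by (intro mult_mono) auto
      then show ?thesis
        using True a_conj_nonneg[of s] by (simp add: tail_density_def ennreal_mult[symmetric] ennreal_leI)
    qed simp
  qed
  finally show ?thesis using tail_split[OF assms(2)] by (simp add: add_right_mono)
qed

lemma tail_finite: assumes "\<tau> > 0" shows "tail \<tau> < \<infinity>"
proof (cases "\<tau> \<ge> 1")
  case True then show ?thesis using tail_antimono[OF True] tail_1_finite by (simp add: le_less_trans)
next
  case False
  have "(\<integral>\<^sup>+ s. tail_density s * indicator {\<tau>..<1} s \<partial>lborel)
      \<le> (\<integral>\<^sup>+ s. ennreal (a_conj 1 * \<tau> powr (-1-p)) * indicator {\<tau>..<1} s \<partial>lborel)"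
  proof (rule nn_integral_mono)
    fix s :: real
    show "tail_density s * indicator {\<tau>..<1} s \<le> ennreal (a_conj 1 * \<tau> powr (-1-p)) * indicator {\<tau>..<1} s"
    proof (cases "s \<in> {\<tau>..<1}")
      case True
      have "a_conj s \<le> a_conj 1" using True by (intro a_conj_le) auto
      moreover have "s powr (-1-p) \<le> \<tau> powr (-1-p)" using True assms p_gt_1 by (intro powr_mono2') auto
      ultimately have "a_conj s * s powr (-1-p) \<le> a_conj 1 * \<tau> powr (-1-p)"
        using a_conj_nonneg[of s] by (intro mult_mono) auto
      then show ?thesis
        using True a_conj_nonneg[of s] by (simp add: tail_density_def ennreal_mult[symmetric] ennreal_leI)
    qed simp
  qed
  also have "\<dots> < \<infinity>" using False by (simp add: nn_integral_cmult_indicator ennreal_mult_less_top)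
  finally show ?thesis using tail_split[of \<tau> 1] False tail_1_finite by simp
qed

definition tail_real :: "real \<Rightarrow> real" where "tail_real t = enn2real (tail t)"

lemma tail_eq: "t > 0 \<Longrightarrow> tail t = ennreal (tail_real t)"
  using tail_finite by (simp add: tail_real_def ennreal_enn2real_if less_top)

lemma tail_real_nonneg: "tail_real t \<ge> 0"
  by (simp add: tail_real_def)

lemma tail_real_ge: assumes "0 < x" "x \<le> y"
  shows "a_conj x * y powr (-1-p) * (y - x) + tail_real y \<le> tail_real x"
proof -
  have nonneg: "a_conj x * y powr (-1-p) * (y - x) \<ge> 0" using assms a_conj_nonneg[of x] by simp
  have "ennreal (a_conj x * y powr (-1-p) * (y - x)) + ennreal (tail_real y) \<le> ennreal (tail_real x)"
    using tail_ge[OF assms] assms by (simp add: tail_eq)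
  then have "ennreal (a_conj x * y powr (-1-p) * (y - x) + tail_real y) \<le> ennreal (tail_real x)"
    by (subst ennreal_plus[OF nonneg tail_real_nonneg])
  then show ?thesis by (subst (asm) ennreal_le_iff) (auto intro: tail_real_nonneg)
qed

definition e :: "real \<Rightarrow> real" where "e t = t powr p * tail_real t"

lemma E_fun_eq: assumes "t \<ge> 0" shows "E_fun n A t = ereal (e t)"
proof (cases "t = 0")
  case True then show ?thesis by (simp add: E_fun_eq_tail e_def zero_ennreal.rep_eq zero_ereal_def)
next
  case False
  with assms have "t > 0" by simp
  then show ?thesis by (simp add: E_fun_eq_tail e_def tail_eq ennreal_mult[symmetric] tail_real_nonneg)
qed

lemma e_nonneg: "e t \<ge> 0" by (simp add: e_def tail_real_nonneg)

lemma e_zero: "e 0 = 0" by (simp add: e_def)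

lemma e_ge_a_conj: assumes \<tau>: "\<tau> > 0" shows "2 powr (-1-p) * a_conj \<tau> \<le> e \<tau>"
proof -
  have "a_conj \<tau> * (2*\<tau>) powr (-1-p) * (2*\<tau> - \<tau>) + tail_real (2*\<tau>) \<le> tail_real \<tau>"
    using \<tau> by (intro tail_real_ge) auto
  then have "a_conj \<tau> * (2*\<tau>) powr (-1-p) * \<tau> \<le> tail_real \<tau>" using tail_real_nonneg[of "2*\<tau>"] by simp
  then have "\<tau> powr p * (a_conj \<tau> * (2*\<tau>) powr (-1-p) * \<tau>) \<le> e \<tau>"
    unfolding e_def by (intro mult_left_mono) auto
  moreover have "\<tau> powr p * (a_conj \<tau> * (2*\<tau>) powr (-1-p) * \<tau>) = 2 powr (-1-p) * a_conj \<tau>"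
  proof -
    have "\<tau> powr p * \<tau> powr (-1-p) = \<tau> powr (-1)" using powr_add[of \<tau> p "-1-p"] by simp
    then have "\<tau> powr p * \<tau> powr (-1-p) * \<tau> = 1" using \<tau> by (simp add: powr_minus)
    then show ?thesis using \<tau> by (simp add: powr_mult algebra_simps)
  qed
  ultimately show ?thesis by simp
qed

lemma tail_real_le:
  assumes \<epsilon>: "\<epsilon> > 0" and small: "\<And>s. 0 \<le> s \<Longrightarrow> s \<le> \<sigma> \<Longrightarrow> a_conj s \<le> \<epsilon> * s"
    and \<tau>: "0 < \<tau>" "\<tau> \<le> \<sigma>"
  shows "tail_real \<tau> \<le> \<epsilon> * ((real n - 1) * \<tau> powr (-q)) + tail_real \<sigma>"
proof -
  have "(\<integral>\<^sup>+ s. tail_density s * indicator {\<tau>..<\<sigma>} s \<partial>lborel)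
      \<le> (\<integral>\<^sup>+ s. ennreal \<epsilon> * (ennreal (s powr (-p)) * indicator {\<tau>..} s) \<partial>lborel)"
  proof (rule nn_integral_mono)
    fix s :: real
    show "tail_density s * indicator {\<tau>..<\<sigma>} s \<le> ennreal \<epsilon> * (ennreal (s powr (-p)) * indicator {\<tau>..} s)"
    proof (cases "s \<in> {\<tau>..<\<sigma>}")
      case True
      then have s: "s > 0" using \<tau> by auto
      have "a_conj s * s powr (-1-p) \<le> \<epsilon> * s * s powr (-1-p)"
        using small[of s] True \<tau> by (intro mult_right_mono) auto
      also have "\<dots> = \<epsilon> * s powr (-p)" using powr_mult_self[OF s] by simp
      finally show ?thesis
        using True a_conj_nonneg[of s] \<epsilon>
        by (simp add: tail_density_def ennreal_mult[symmetric] ennreal_leI)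
    qed simp
  qed
  also have "\<dots> = ennreal \<epsilon> * (\<integral>\<^sup>+ s. ennreal (s powr (-p)) * indicator {\<tau>..} s \<partial>lborel)"
    by (rule nn_integral_cmult) measurable
  also have "(\<integral>\<^sup>+ s. ennreal (s powr (-p)) * indicator {\<tau>..} s \<partial>lborel) = ennreal (\<tau> powr (1-p) / (p-1))"
    using \<tau> p_gt_1 by (intro nn_integral_powr_Ici) auto
  also have "\<tau> powr (1-p) / (p-1) = (1 / q) * \<tau> powr (-q)" by (simp add: p_eq)
  also have "1 / q = real n - 1" using q_mult q_pos by (simp add: field_simps)
  finally have "(\<integral>\<^sup>+ s. tail_density s * indicator {\<tau>..<\<sigma>} s \<partial>lborel)
      \<le> ennreal (\<epsilon> * ((real n - 1) * \<tau> powr (-q)))"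
    using \<epsilon> n_ge_2 by (simp add: ennreal_mult)
  then have "ennreal (tail_real \<tau>) \<le> ennreal (\<epsilon> * ((real n - 1) * \<tau> powr (-q))) + ennreal (tail_real \<sigma>)"
    using tail_split[OF \<tau>(2)] \<tau> by (simp add: tail_eq add_right_mono)
  also have "\<dots> = ennreal (\<epsilon> * ((real n - 1) * \<tau> powr (-q)) + tail_real \<sigma>)"
    using \<epsilon> n_ge_2 tail_real_nonneg by (subst ennreal_plus) auto
  finally show ?thesis using \<epsilon> n_ge_2 tail_real_nonneg[of \<sigma>] by (subst (asm) ennreal_le_iff) auto
qed

text \<open>By \<open>tail_real_le\<close>, \<open>e \<tau> \<le> \<epsilon>/2 * \<tau> + \<tau> powr p * tail_real \<sigma>\<close> for small \<open>\<tau>\<close>, and \<open>p > 1\<close>.\<close>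
lemma e_sublinear: assumes \<epsilon>: "\<epsilon> > 0" shows "\<forall>\<^sub>F \<tau> in at_right 0. e \<tau> \<le> \<epsilon> * \<tau>"
  unfolding eventually_at_right_field
proof -
  have n1: "real n - 1 \<ge> 1" using n_ge_2 by simp
  define \<epsilon>' where "\<epsilon>' = \<epsilon> / (2 * (real n - 1))"
  have \<epsilon>': "\<epsilon>' > 0" "\<epsilon>' * (real n - 1) = \<epsilon>/2" using \<epsilon> n1 by (auto simp: \<epsilon>'_def field_simps)
  obtain \<sigma> where \<sigma>: "\<sigma> > 0" "\<And>s. 0 \<le> s \<Longrightarrow> s \<le> \<sigma> \<Longrightarrow> a_conj s \<le> \<epsilon>' * s"
    using a_conj_sublinear[OF \<epsilon>'(1)] by auto
  define T where "T = tail_real \<sigma>"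
  have T: "T \<ge> 0" by (simp add: T_def tail_real_nonneg)
  define \<delta> where "\<delta> = min \<sigma> ((\<epsilon> / (2 * (T + 1))) powr (real n - 1))"
  have \<delta>: "\<delta> > 0" using \<sigma> \<epsilon> T by (simp add: \<delta>_def)
  have "e \<tau> \<le> \<epsilon> * \<tau>" if \<tau>: "0 < \<tau>" "\<tau> < \<delta>" for \<tau>
  proof -
    have "\<tau> powr q \<le> ((\<epsilon> / (2 * (T + 1))) powr (real n - 1)) powr q"
      using \<tau> q_pos by (intro powr_mono2) (auto simp: \<delta>_def)
    also have "\<dots> = \<epsilon> / (2 * (T + 1))"
      using q_mult T \<epsilon> by (simp add: powr_powr mult.commute)
    finally have "\<tau> powr q * T \<le> \<epsilon> / (2 * (T + 1)) * T" using T by (intro mult_right_mono)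
    also have "\<dots> \<le> \<epsilon> / 2" using T \<epsilon> by (simp add: field_simps)
    finally have small: "\<tau> powr q * T \<le> \<epsilon> / 2" .
    have "e \<tau> \<le> \<tau> powr p * (\<epsilon>' * ((real n - 1) * \<tau> powr (-q)) + T)"
      unfolding e_def T_def
      using tail_real_le[OF \<epsilon>'(1) \<sigma>(2)] \<tau> by (intro mult_left_mono) (auto simp: \<delta>_def)
    also have "\<dots> = (\<epsilon>' * (real n - 1)) * (\<tau> powr p * \<tau> powr (-q)) + \<tau> * (\<tau> powr q * T)"
      using \<tau> powr_add[of \<tau> 1 q] by (simp add: p_eq algebra_simps)
    also have "\<tau> powr p * \<tau> powr (-q) = \<tau>" using powr_add[of \<tau> p "-q"] \<tau> by (simp add: p_eq)
    also have "\<tau> * (\<tau> powr q * T) \<le> \<tau> * (\<epsilon>/2)" using small \<tau> by (intro mult_left_mono) auto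
    finally show ?thesis using \<epsilon>'(2) by simp
  qed
  with \<delta> show "\<exists>\<delta>>0. \<forall>\<tau>>0. \<tau> < \<delta> \<longrightarrow> e \<tau> \<le> \<epsilon> * \<tau>" by blast
qed

lemma e_ge_powr: "\<exists>\<delta>>0. \<forall>\<tau>. 0 < \<tau> \<and> \<tau> \<le> \<delta> \<longrightarrow> M * \<tau> powr p \<le> e \<tau>"
proof -
  obtain \<delta> where \<delta>: "\<delta> > 0" "\<And>\<tau>. 0 < \<tau> \<Longrightarrow> \<tau> \<le> \<delta> \<Longrightarrow> ennreal M \<le> tail \<tau>"
    using tail_unbounded_at_0[of M] by auto
  have "M * \<tau> powr p \<le> e \<tau>" if \<tau>: "0 < \<tau>" "\<tau> \<le> \<delta>" for \<tau>
  proof -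
    have "M \<le> tail_real \<tau>"
    proof (cases "M \<ge> 0")
      case True then show ?thesis using \<delta>(2)[OF \<tau>] \<tau> by (simp add: tail_eq ennreal_le_iff tail_real_nonneg)
    qed (use tail_real_nonneg[of \<tau>] in simp)
    then show ?thesis using mult_right_mono[of M "tail_real \<tau>" "\<tau> powr p"] by (simp add: e_def mult.commute)
  qed
  with \<delta> show ?thesis by auto
qed

text \<open>Comparing \<open>e\<close> at \<open>\<sigma>\<close> and at \<open>c * \<sigma>\<close>, \<open>c = l ^ (n - 1)\<close>: the tail from \<open>c * \<sigma>\<close> exceeds the tail from \<open>\<sigma>\<close>
  by at least the \<open>tail_real_ge\<close> increment, and \<open>c powr p = l ^ n\<close>.\<close>
lemma e_scale_ge: assumes l: "0 < l" "l < 1" and \<sigma>: "\<sigma> > 0"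
  shows "l ^ n * (e \<sigma> + (1 - l ^ (n-1)) * a_conj (l ^ (n-1) * \<sigma>)) \<le> e (l ^ (n-1) * \<sigma>)"
proof -
  define c where "c = l ^ (n-1)"
  have c: "c > 0" "c < 1" using l n_ge_2 by (auto simp: c_def power_less_one_iff)
  have "a_conj (c*\<sigma>) * \<sigma> powr (-1-p) * (\<sigma> - c*\<sigma>) + tail_real \<sigma> \<le> tail_real (c*\<sigma>)"
    using c \<sigma> by (intro tail_real_ge) auto
  moreover have "a_conj (c*\<sigma>) * \<sigma> powr (-1-p) * (\<sigma> - c*\<sigma>) = (1-c) * a_conj (c*\<sigma>) * (\<sigma> * \<sigma> powr (-1-p))"
    by (simp add: algebra_simps)
  then have "a_conj (c*\<sigma>) * \<sigma> powr (-1-p) * (\<sigma> - c*\<sigma>) = (1-c) * a_conj (c*\<sigma>) * \<sigma> powr (-p)"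
    by (simp only: powr_mult_self[OF \<sigma>])
  ultimately have "\<sigma> powr p * ((1-c) * a_conj (c*\<sigma>) * \<sigma> powr (-p) + tail_real \<sigma>) \<le> \<sigma> powr p * tail_real (c*\<sigma>)"
    by (intro mult_left_mono) auto
  moreover have "\<sigma> powr p * ((1-c) * a_conj (c*\<sigma>) * \<sigma> powr (-p) + tail_real \<sigma>) = (1-c) * a_conj (c*\<sigma>) + e \<sigma>"
  proof -
    have "\<sigma> powr p * \<sigma> powr (-p) = 1" using \<sigma> by (simp add: powr_minus)
    moreover have "\<sigma> powr p * ((1-c) * a_conj (c*\<sigma>) * \<sigma> powr (-p) + tail_real \<sigma>)
        = (1-c) * a_conj (c*\<sigma>) * (\<sigma> powr p * \<sigma> powr (-p)) + e \<sigma>"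
      by (simp add: e_def algebra_simps)
    ultimately show ?thesis by simp
  qed
  ultimately have "c powr p * ((1-c) * a_conj (c*\<sigma>) + e \<sigma>) \<le> c powr p * (\<sigma> powr p * tail_real (c*\<sigma>))"
    by (intro mult_left_mono) auto
  also have "\<dots> = e (c*\<sigma>)" using c \<sigma> by (simp add: e_def powr_mult)
  also have "c powr p = l ^ n"
  proof -
    have "real (n-1) * p = real n"
      using n_ge_2 by (simp add: p_def holder_conj_def of_nat_diff)
    then have "c powr p = l powr real n" using l by (simp add: c_def powr_realpow[symmetric] powr_powr)
    then show ?thesis using l by (simp add: powr_realpow)
  qed
  finally show ?thesis by (simp add: c_def add.commute)
qed

definition b :: "real \<Rightarrow> real" where "b t = real_of_ereal (B_fun n A t)"

lemma b_basic:
  assumes t: "t \<ge> 0"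
  shows B_fun_eq: "B_fun n A t = ereal (b t)"
    and b_ge: "\<And>\<tau>. \<tau> \<ge> 0 \<Longrightarrow> \<tau> * t - e \<tau> \<le> b t"
    and b_least: "\<And>y. (\<And>\<tau>. \<tau> \<ge> 0 \<Longrightarrow> \<tau> * t - e \<tau> \<le> y) \<Longrightarrow> b t \<le> y"
proof -
  have B: "B_fun n A = young_conj (E_fun n A)" using n_ge_2 by (simp add: B_fun_def)
  define \<kappa> where "\<kappa> = (2::real) powr (-1-p)"
  have \<kappa>: "\<kappa> > 0" by (simp add: \<kappa>_def)
  define T where "T = (t+1) / \<kappa>"
  have T: "T \<ge> 0" "\<kappa> * T = t + 1" using t \<kappa> by (auto simp: T_def)
  have bounded: "\<tau> * t - e \<tau> \<le> \<kappa> * a T" if \<tau>: "\<tau> \<ge> 0" for \<tau>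
  proof (cases "\<tau> = 0")
    case True then show ?thesis using e_zero a_nonneg[OF T(1)] \<kappa> by simp
  next
    case False
    with \<tau> have "\<tau> > 0" by simp
    have "\<kappa> * (T * \<tau> - a T) \<le> \<kappa> * a_conj \<tau>" using T \<kappa> a_conj_ge[of T \<tau>] by simp
    also have "\<dots> \<le> e \<tau>" using e_ge_a_conj[OF \<open>\<tau> > 0\<close>] by (simp add: \<kappa>_def)
    finally have "(\<kappa> * T) * \<tau> - \<kappa> * a T \<le> e \<tau>" by (simp add: algebra_simps)
    then have "\<tau> * t + \<tau> - \<kappa> * a T \<le> e \<tau>" unfolding T(2) by (simp add: algebra_simps)
    then show ?thesis using \<open>\<tau> > 0\<close> by linarith
  qed
  note conj = young_conj_real[where H="E_fun n A" and h=e and t=t, OF E_fun_eq bounded]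
  show "B_fun n A t = ereal (b t)" using conj(1) by (simp add: B b_def)
  show "\<tau> * t - e \<tau> \<le> b t" if "\<tau> \<ge> 0" for \<tau>
    unfolding b_def B by (rule conj(2)) (use that in auto)
  show "b t \<le> y" if "\<And>\<tau>. \<tau> \<ge> 0 \<Longrightarrow> \<tau> * t - e \<tau> \<le> y" for y
    unfolding b_def B by (rule conj(3)) (use that in auto)
qed

lemma b_zero: "b 0 = 0"
  using b_ge[of 0 0] b_least[of 0 0] e_nonneg e_zero by (simp add: antisym)

lemma b_pos: assumes t: "t > 0" shows "b t > 0"
proof -
  obtain d where d: "d > 0" "\<And>\<tau>. 0 < \<tau> \<Longrightarrow> \<tau> < d \<Longrightarrow> e \<tau> \<le> (t/2) * \<tau>"
    using e_sublinear[of "t/2"] t by (auto simp: eventually_at_right_field)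
  have "0 < (d/2) * t - (t/2) * (d/2)" using d t by simp
  also have "\<dots> \<le> (d/2) * t - e (d/2)" using d(2)[of "d/2"] d(1) by (simp add: mult.commute)
  also have "\<dots> \<le> b t" using d t by (intro b_ge) auto
  finally show ?thesis .
qed

lemma continuous_on_b: "continuous_on {0<..} b"
proof (rule convex_on_continuous)
  show "convex_on {0<..} b"
  proof (rule convex_onI)
    fix u x y :: real assume u: "0 < u" "u < 1" and xy: "x \<in> {0<..}" "y \<in> {0<..}"
    have "b ((1-u) * x + u * y) \<le> (1-u) * b x + u * b y"
    proof (rule b_least)
      show "(1-u) * x + u * y \<ge> 0" using u xy by (auto intro: add_nonneg_nonneg)
      fix \<tau> :: real assume \<tau>: "\<tau> \<ge> 0"
      have "\<tau> * ((1-u) * x + u * y) - e \<tau> = (1-u) * (\<tau> * x - e \<tau>) + u * (\<tau> * y - e \<tau>)"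
        by (simp add: algebra_simps)
      also have "\<dots> \<le> (1-u) * b x + u * b y"
        using b_ge[of x \<tau>] b_ge[of y \<tau>] \<tau> u xy by (intro add_mono mult_left_mono) auto
      finally show "\<tau> * ((1-u) * x + u * y) - e \<tau> \<le> (1-u) * b x + u * b y" .
    qed
    then show "b ((1 - u) *\<^sub>R x + u *\<^sub>R y) \<le> (1 - u) * b x + u * b y" by simp
  qed simp
qed simp

text \<open>Substituting \<open>\<tau> = c * \<sigma>\<close> with \<open>c = l ^ (n - 1)\<close> in the supremum defining \<open>b (l * t)\<close> turns it into
  \<open>l ^ n\<close> times the supremum defining \<open>b t\<close>, up to the loss provided by \<open>e_scale_ge\<close>.\<close>
lemma b_scale_term_le: assumes l: "0 < l" "l < 1" and t: "t > 0" and \<sigma>: "\<sigma> > 0"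
  shows "l ^ (n-1) * \<sigma> * (l * t) - e (l ^ (n-1) * \<sigma>) + l ^ n * ((1 - l ^ (n-1)) * a_conj (l ^ (n-1) * \<sigma>))
    \<le> l ^ n * b t"
proof -
  have "l ^ n * e \<sigma> + l ^ n * ((1 - l ^ (n-1)) * a_conj (l ^ (n-1) * \<sigma>)) \<le> e (l ^ (n-1) * \<sigma>)"
    using e_scale_ge[OF l \<sigma>] by (simp only: distrib_left)
  moreover have "l ^ n * (\<sigma> * t) - l ^ n * e \<sigma> \<le> l ^ n * b t"
    using b_ge[of t \<sigma>] \<sigma> t l by (simp flip: right_diff_distrib)
  moreover have "l ^ (n-1) * \<sigma> * (l * t) = l ^ n * (\<sigma> * t)"
    using n_ge_2 by (cases n) (auto simp: algebra_simps)
  ultimately show ?thesis by linarith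
qed

text \<open>For \<open>\<sigma>\<close> not too small the loss in \<open>b_scale_term_le\<close> is bounded below by a uniform \<open>\<eta> > 0\<close>;
  small \<open>\<sigma>\<close> contribute at most \<open>l ^ n * b t / 2\<close>.\<close>
lemma b_scale_less: assumes l: "0 < l" "l < 1" and t: "t > 0" shows "b (l * t) < l ^ n * b t"
proof -
  define c where "c = l ^ (n-1)"
  have c: "c > 0" "c < 1" "c * l = l ^ n"
    using l n_ge_2 by (auto simp: c_def power_less_one_iff power_Suc[symmetric] mult.commute)
  have bt: "b t > 0" using b_pos t by simp
  define \<sigma>0 where "\<sigma>0 = b t / (2*t)"
  have \<sigma>0: "\<sigma>0 > 0" using bt t by (simp add: \<sigma>0_def)
  define \<eta> where "\<eta> = l ^ n * ((1-c) * a_conj (c*\<sigma>0))"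
  have \<eta>: "\<eta> > 0" using l c \<sigma>0 a_conj_pos[of "c*\<sigma>0"] by (simp add: \<eta>_def)
  have ln: "l ^ n > 0" using l by simp
  have "\<tau> * (l*t) - e \<tau> \<le> max (l ^ n * b t - \<eta>) (l ^ n * b t / 2)" if \<tau>: "\<tau> \<ge> 0" for \<tau>
  proof -
    define \<sigma> where "\<sigma> = \<tau> / c"
    have \<tau>_eq: "\<tau> = c * \<sigma>" and \<sigma>: "\<sigma> \<ge> 0" using \<tau> c by (auto simp: \<sigma>_def)
    show ?thesis
    proof (cases "\<sigma> \<ge> \<sigma>0")
      case True
      have "\<eta> \<le> l ^ n * ((1 - c) * a_conj (c * \<sigma>))"
        using a_conj_le[of "c*\<sigma>0" "c*\<sigma>"] True ln c by (simp add: \<eta>_def mult_left_mono)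
      then show ?thesis
        using b_scale_term_le[OF l t, of \<sigma>] True \<sigma>0 by (simp add: c_def \<tau>_eq)
    next
      case False
      have "\<tau> * (l*t) = l ^ n * (\<sigma> * t)" unfolding \<tau>_eq c(3)[symmetric] by (simp add: algebra_simps)
      also have "\<dots> \<le> l ^ n * (\<sigma>0 * t)" using False t ln by (intro mult_left_mono) auto
      also have "\<dots> = l ^ n * b t / 2" using t by (simp add: \<sigma>0_def)
      finally show ?thesis using e_nonneg[of \<tau>] by simp
    qed
  qed
  then have "b (l*t) \<le> max (l ^ n * b t - \<eta>) (l ^ n * b t / 2)"
    using l t by (intro b_least) auto
  also have "\<dots> < l ^ n * b t" using \<eta> ln bt by simp
  finally show ?thesis .
qed

lemma e_ge_linear: assumes \<delta>: "0 < \<delta>" "\<delta> \<le> \<tau>"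
  shows "\<tau> * (2 powr (-1-p) * a_conj \<delta> / \<delta>) \<le> e \<tau>"
proof -
  have \<tau>: "\<tau> > 0" using \<delta> by simp
  have "a_conj ((\<delta>/\<tau>) * \<tau>) \<le> (\<delta>/\<tau>) * a_conj \<tau>" using \<delta> \<tau> by (intro a_conj_scale_le) auto
  then have "\<tau> * (a_conj \<delta> / \<delta>) \<le> a_conj \<tau>" using \<tau> \<delta> by (simp add: field_simps)
  then have "2 powr (-1-p) * (\<tau> * (a_conj \<delta> / \<delta>)) \<le> 2 powr (-1-p) * a_conj \<tau>"
    by (rule mult_left_mono) simp
  also have "\<dots> \<le> e \<tau>" by (rule e_ge_a_conj[OF \<tau>])
  finally show ?thesis by (metis mult.left_commute times_divide_eq_right)
qed

text \<open>For \<open>\<tau> \<ge> \<delta>\<close> the term \<open>\<tau> * t - e \<tau>\<close> is nonpositive by \<open>e_ge_linear\<close>; for \<open>\<tau> < \<delta>\<close> either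
  \<open>M * \<tau> powr p \<ge> \<tau> * t\<close> or \<open>\<tau> < (t / M) ^ (n - 1)\<close>, since \<open>q * (n - 1) = 1\<close>.\<close>
lemma b_le_power:
  assumes M: "M \<ge> 1" and \<delta>: "\<delta> > 0" "\<And>\<tau>. 0 < \<tau> \<Longrightarrow> \<tau> \<le> \<delta> \<Longrightarrow> M * \<tau> powr p \<le> e \<tau>"
    and t: "0 < t" "t < 2 powr (-1-p) * a_conj \<delta> / \<delta>"
  shows "b t \<le> t ^ n / M ^ (n-1)"
proof (rule b_least)
  show "t \<ge> 0" using t by simp
  fix \<tau> :: real assume \<tau>: "\<tau> \<ge> 0"
  have bound_nonneg: "0 \<le> t ^ n / M ^ (n-1)" using t M by simp
  consider "\<tau> = 0" | "\<delta> \<le> \<tau>" | "0 < \<tau>" "\<tau> < \<delta>" using \<tau> by fastforce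
  then show "\<tau> * t - e \<tau> \<le> t ^ n / M ^ (n-1)"
  proof cases
    case 1
    then show ?thesis using e_zero bound_nonneg by simp
  next
    case 2
    then have "\<tau> * t < \<tau> * (2 powr (-1-p) * a_conj \<delta> / \<delta>)"
      using t \<delta> by (intro mult_strict_left_mono) auto
    then show ?thesis using e_ge_linear[OF \<delta>(1) 2] bound_nonneg by linarith
  next
    case 3
    have e_ge: "\<tau> * (M * \<tau> powr q) \<le> e \<tau>"
      using \<delta>(2)[of \<tau>] 3 powr_add[of \<tau> 1 q] by (simp add: p_eq algebra_simps)
    show ?thesis
    proof (cases "\<tau> powr q \<ge> t / M")
      case True
      then have "t \<le> M * \<tau> powr q" using M by (simp add: field_simps)
      then have "\<tau> * t \<le> \<tau> * (M * \<tau> powr q)" using 3 by simp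
      then show ?thesis using e_ge bound_nonneg by simp
    next
      case False
      have "\<tau> = (\<tau> powr q) powr (real n - 1)" using 3 q_mult by (simp add: powr_powr)
      also have "\<dots> < (t / M) powr (real n - 1)"
        using False 3 n_ge_2 by (intro powr_less_mono2) auto
      also have "\<dots> = (t / M) ^ (n-1)" using t M n_ge_2 by (simp add: powr_realpow[symmetric] of_nat_diff)
      finally have "\<tau> * t \<le> (t / M) ^ (n-1) * t" using t by simp
      also have "\<dots> = t ^ n / M ^ (n-1)"
        using n_ge_2 by (cases n) (auto simp: power_divide power_Suc2)
      finally show ?thesis using e_nonneg[of \<tau>] by simp
    qed
  qed
qed

lemma b_flat: assumes \<epsilon>: "\<epsilon> > 0" shows "\<forall>\<^sub>F t in at_right 0. b t \<le> \<epsilon> * t ^ n"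
  unfolding eventually_at_right_field
proof -
  define M where "M = max 1 (1/\<epsilon>)"
  have M: "M \<ge> 1" "M \<ge> 1/\<epsilon>" by (auto simp: M_def)
  have "1 \<le> \<epsilon> * M" using M \<epsilon> by (simp add: field_simps)
  also have "\<dots> \<le> \<epsilon> * M ^ (n-1)"
    using power_increasing[of 1 "n-1" M] M n_ge_2 \<epsilon> by simp
  finally have M_power: "1 \<le> \<epsilon> * M ^ (n-1)" .
  obtain \<delta> where \<delta>: "\<delta> > 0" "\<And>\<tau>. 0 < \<tau> \<Longrightarrow> \<tau> \<le> \<delta> \<Longrightarrow> M * \<tau> powr p \<le> e \<tau>"
    using e_ge_powr[of M] by auto
  define d where "d = 2 powr (-1-p) * a_conj \<delta> / \<delta>"
  have d: "d > 0" using a_conj_pos[OF \<delta>(1)] \<delta> by (simp add: d_def)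
  have "b t \<le> \<epsilon> * t ^ n" if t: "0 < t" "t < d" for t
  proof -
    have "b t \<le> t ^ n / M ^ (n-1)" using t by (intro b_le_power[OF M(1) \<delta>]) (auto simp: d_def)
    also have "\<dots> \<le> \<epsilon> * t ^ n"
      using mult_left_mono[OF M_power, of "t ^ n"] t M by (simp add: field_simps)
    finally show ?thesis .
  qed
  with d show "\<exists>d>0. \<forall>t>0. t < d \<longrightarrow> b t \<le> \<epsilon> * t ^ n" by blast
qed

lemma superhomogeneous_b: "superhomogeneous n b"
  by unfold_locales (use n_ge_2 in \<open>auto simp: b_zero b_pos continuous_on_b b_scale_less\<close>)

end

lemma J_fun_properties_n_ge_2:
  assumes "n \<ge> 2" "young_function A" "cond_C1 n A" "cond_C2 A" "cond_C3 n A"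
    and "gauge_function n \<phi>"
  shows "strict_mono_on {0<..} (J_fun n A \<phi>) \<and>
         (J_fun n A \<phi> \<longlongrightarrow> 0) (at_right 0) \<and>
         filterlim (J_fun n A \<phi>) at_top at_top \<and>
         bij_betw (J_fun n A \<phi>) {0..} {0..}"
proof -
  interpret young_dim_ge_2 A n by unfold_locales (use assms in auto)
  interpret superhomogeneous n b by (rule superhomogeneous_b)
  show ?thesis by (rule J_fun_properties) (use assms in \<open>auto simp: B_fun_eq b_flat\<close>)
qed

theorem lemma4p2:
  fixes n :: nat and A :: "real \<Rightarrow> ereal" and \<phi> :: "real \<Rightarrow> real"
  assumes "n \<ge> 1"
    and "young_function A" and "cond_C1 n A" and "cond_C2 A" and "cond_C3 n A"
    and "gauge_function n \<phi>"
  shows "strict_mono_on {0<..} (J_fun n A \<phi>) \<and>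
         (J_fun n A \<phi> \<longlongrightarrow> 0) (at_right 0) \<and>
         filterlim (J_fun n A \<phi>) at_top at_top \<and>
         bij_betw (J_fun n A \<phi>) {0..} {0..}"
proof (cases "n = 1")
  case True
  then show ?thesis using J_fun_properties_n_eq_1[of A \<phi>] assms by simp
next
  case False
  then show ?thesis using J_fun_properties_n_ge_2[of n A \<phi>] assms by simp
qed

end
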